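(* Let $2<p<3$ and let $f:\mathbb{R}^n\to L(\mathbb{R}^d,\mathbb{R}^n)$ be of class $C^3_b$, with $c_f=\|f\|_{\sup}+\|f\|_{\mathrm{Lip}}$. There is a function $\epsilon:[1,\infty)\to(0,\infty)$ with the following property. For every $p$-rough path $\mathbf{X}=(X,\mathbb{X})$, every $x_0\in\mathbb{R}^n$, every $m\ge1$ and every $T\in(0,1]$ with $\omega_{\mathbf X}(0,T)\le\epsilon(m)$, the map $\mathbb{I}$ sends the ball $\mathcal{B}_T(m)$ into itself.
   Context: Variation norms on an interval $[s,t]$: $\|h\|_{p,[s,t]}=\big(\sup_\pi\sum_i|h_{t_{i+1}}-h_{t_i}|^p\big)^{1/p}$ for paths and $\|\Xi\|_{q,[s,t]}=\big(\sup_\pi\sum_i|\Xi_{t_it_{i+1}}|^q\big)^{1/q}$ for two-parameter functions, over finite partitions of $[s,t]$. $(\mathbb{R}^d)^{\otimes2}\cong L(\mathbb{R}^d,\mathbb{R}^d)$. A $p$-rough path is a continuous map $(s,t)\mapsto(X_{st},\mathbb{X}_{st})\in\mathbb{R}^d\times(\mathbb{R}^d)^{\otimes2}$ ($0\le s\le t\le1$) with Chen's relations $X_{st}=X_{su}+X_{ut}$, $\mathbb{X}_{st}=\mathbb{X}_{su}+\mathbb{X}_{ut}+X_{su}\otimes X_{ut}$, finite $p$-variation of $X$ and finite $(p/2)$-variation of $\mathbb{X}$; set $\omega_{\mathbf X}(s,t)=\|X\|_{p,[s,t]}+\|\mathbb{X}\|_{p/2,[s,t]}$. For a finite-dimensional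 normed space $E$, an $E$-valued path on $[0,T]$ controlled by $X$ is a pair $(b,b')$, $b:[0,T]\to E$, $b':[0,T]\to L(\mathbb{R}^d,E)$ continuous of finite $p$-variation, such that $R^{\mathbf b}_{st}=b_t-b_s-b'_sX_{st}$ has finite $(p/2)$-variation. Rough integral: for an $L(\mathbb{R}^d,\mathbb{R}^n)$-valued controlled path $(b,b')$ on $[0,T]$ (so $b'_s\in L((\mathbb{R}^d)^{\otimes2},\mathbb{R}^n)$), $\int_0^\cdot\mathbf{b}\,d\mathbf{X}$ is the unique $\varphi:[0,T]\to\mathbb{R}^n$ with $\varphi_0=0$ such that for some continuous superadditive control $\omega$ vanishing on the diagonal, some $\theta>1$ and $c<\infty$, $|\varphi_t-\varphi_s-b_sX_{st}-b'_s\mathbb{X}_{st}|\le c\,\omega(s,t)^\theta$. For an $\mathbb{R}^n$-valued controlled path $\mathbf{z}=(z,z')$ on $[0,T]$, $f(\mathbf z)$ is the $L(\mathbb{R}^d,\mathbb{R}^n)$-valued controlled path $(f(z_t),f'(z_t)z'_t)$, where $(f'(z_t)z'_t)(v)=Df(z_t)[z'_tv]$ for $v\in\mathbb{R}^d$, and $\mathbb{I}(\mathbf z)=\big(x_0+\int_0^\cdot f(\mathbf z)\,d\mathbf X,\ f(z)\big)$. The ball $\mathcal{B}_T(m)$ is the set of $\mathbb{R}^n$-valued paths $\mathbf z=(z,z')$ on $[0,T]$ controlled by $X$ with $\|z\|_{p,[0,T]}\le m/c_f$, $\|R^{\mathbf z}\|_{p/2,[0,T]}\le m^2$, $\|z'\|_{p,[0,T]}\le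 m$ and $\sup_{t\le T}|z'_t|\le\|f\|_{\sup}$. *)

theory Defs
  imports "HOL-Analysis.Analysis"
begin

definition partitions :: "real \<Rightarrow> real \<Rightarrow> real list set" where
  "partitions s t = {\<pi>. \<pi> \<noteq> [] \<and> sorted_wrt (<) \<pi> \<and> hd \<pi> = s \<and> last \<pi> = t}"

definition var_sum :: "real \<Rightarrow> (real \<Rightarrow> real \<Rightarrow> 'e::real_normed_vector) \<Rightarrow> real list \<Rightarrow> real" where
  "var_sum q \<Xi> \<pi> = (\<Sum>i < length \<pi> - 1. norm (\<Xi> (\<pi> ! i) (\<pi> ! Suc i)) powr q)"

definition finite_var2 :: "real \<Rightarrow> (real \<Rightarrow> real \<Rightarrow> 'e::real_normed_vector) \<Rightarrow> real \<Rightarrow> real \<Rightarrow> bool" where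
  "finite_var2 q \<Xi> s t \<longleftrightarrow> bdd_above (var_sum q \<Xi> ` partitions s t)"

definition var2 :: "real \<Rightarrow> (real \<Rightarrow> real \<Rightarrow> 'e::real_normed_vector) \<Rightarrow> real \<Rightarrow> real \<Rightarrow> real" where
  "var2 q \<Xi> s t = (SUP \<pi> \<in> partitions s t. var_sum q \<Xi> \<pi>) powr (1 / q)"

definition incr :: "(real \<Rightarrow> 'e::real_normed_vector) \<Rightarrow> real \<Rightarrow> real \<Rightarrow> 'e" where
  "incr h s t = h t - h s"

definition finite_pvar :: "real \<Rightarrow> (real \<Rightarrow> 'e::real_normed_vector) \<Rightarrow> real \<Rightarrow> real \<Rightarrow> bool" where
  "finite_pvar p h s t \<longleftrightarrow> finite_var2 p (incr h) s t"

definition pvar :: "real \<Rightarrow> (real \<Rightarrow> 'e::real_normed_vector) \<Rightarrow> real \<Rightarrow> real \<Rightarrow> real" where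
  "pvar p h s t = var2 p (incr h) s t"

text \<open>a \<otimes> b is identified with the linear map v \<mapsto> (b \<bullet> v) a.\<close>
definition tensor :: "'x::euclidean_space \<Rightarrow> 'x \<Rightarrow> ('x \<Rightarrow>\<^sub>L 'x)" where
  "tensor a b = Blinfun (\<lambda>v. (b \<bullet> v) *\<^sub>R a)"

text \<open>Action of g \<in> L(R^d, L(R^d,E)) \<cong> L((R^d)\<otimes>2, E) on a tensor M;
  on elementary tensors: apply2 g (tensor a b) = g a b.\<close>
definition apply2 :: "('x::euclidean_space \<Rightarrow>\<^sub>L ('x \<Rightarrow>\<^sub>L 'e::real_normed_vector)) \<Rightarrow> ('x \<Rightarrow>\<^sub>L 'x) \<Rightarrow> 'e" where
  "apply2 g M = (\<Sum>i\<in>Basis. \<Sum>j\<in>Basis. (i \<bullet> blinfun_apply M j) *\<^sub>R blinfun_apply (blinfun_apply g i) j)"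

definition tri_set :: "real \<Rightarrow> (real \<times> real) set" where
  "tri_set T = {(s, t). 0 \<le> s \<and> s \<le> t \<and> t \<le> T}"

definition rough_path :: "real \<Rightarrow> (real \<Rightarrow> real \<Rightarrow> 'x::euclidean_space) \<Rightarrow> (real \<Rightarrow> real \<Rightarrow> ('x \<Rightarrow>\<^sub>L 'x)) \<Rightarrow> bool" where
  "rough_path p X XX \<longleftrightarrow>
     continuous_on (tri_set 1) (\<lambda>(s, t). (X s t, XX s t)) \<and>
     (\<forall>s u t. 0 \<le> s \<and> s \<le> u \<and> u \<le> t \<and> t \<le> 1 \<longrightarrow>
        X s t = X s u + X u t \<and> XX s t = XX s u + XX u t + tensor (X s u) (X u t)) \<and>
     finite_var2 p X 0 1 \<and> finite_var2 (p / 2) XX 0 1"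

definition omega_rp :: "real \<Rightarrow> (real \<Rightarrow> real \<Rightarrow> 'x::euclidean_space) \<Rightarrow> (real \<Rightarrow> real \<Rightarrow> ('x \<Rightarrow>\<^sub>L 'x)) \<Rightarrow> real \<Rightarrow> real \<Rightarrow> real" where
  "omega_rp p X XX s t = var2 p X s t + var2 (p / 2) XX s t"

definition remainder :: "(real \<Rightarrow> real \<Rightarrow> 'x::euclidean_space) \<Rightarrow> (real \<Rightarrow> 'e::real_normed_vector) \<Rightarrow> (real \<Rightarrow> ('x \<Rightarrow>\<^sub>L 'e)) \<Rightarrow> real \<Rightarrow> real \<Rightarrow> 'e" where
  "remainder X b b' s t = b t - b s - blinfun_apply (b' s) (X s t)"

definition controlled :: "real \<Rightarrow> (real \<Rightarrow> real \<Rightarrow> 'x::euclidean_space) \<Rightarrow> real \<Rightarrow> (real \<Rightarrow> 'e::euclidean_space) \<Rightarrow> (real \<Rightarrow> ('x \<Rightarrow>\<^sub>L 'e)) \<Rightarrow> bool" where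
  "controlled p X T b b' \<longleftrightarrow>
     continuous_on {0..T} b \<and> continuous_on {0..T} b' \<and>
     finite_pvar p b 0 T \<and> finite_pvar p b' 0 T \<and>
     finite_var2 (p / 2) (remainder X b b') 0 T"

definition control :: "real \<Rightarrow> (real \<Rightarrow> real \<Rightarrow> real) \<Rightarrow> bool" where
  "control T \<omega> \<longleftrightarrow>
     continuous_on (tri_set T) (\<lambda>(s, t). \<omega> s t) \<and>
     (\<forall>s t. 0 \<le> s \<and> s \<le> t \<and> t \<le> T \<longrightarrow> 0 \<le> \<omega> s t) \<and>
     (\<forall>s. 0 \<le> s \<and> s \<le> T \<longrightarrow> \<omega> s s = 0) \<and>
     (\<forall>s u t. 0 \<le> s \<and> s \<le> u \<and> u \<le> t \<and> t \<le> T \<longrightarrow> \<omega> s u + \<omega> u t \<le> \<omega> s t)"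

definition rough_integral :: "(real \<Rightarrow> real \<Rightarrow> 'x::euclidean_space) \<Rightarrow> (real \<Rightarrow> real \<Rightarrow> ('x \<Rightarrow>\<^sub>L 'x)) \<Rightarrow> real
    \<Rightarrow> (real \<Rightarrow> ('x \<Rightarrow>\<^sub>L 'y::euclidean_space)) \<Rightarrow> (real \<Rightarrow> ('x \<Rightarrow>\<^sub>L ('x \<Rightarrow>\<^sub>L 'y))) \<Rightarrow> real \<Rightarrow> 'y" where
  "rough_integral X XX T b b' = (THE \<phi>. \<phi> 0 = 0 \<and> (\<forall>t. t \<notin> {0..T} \<longrightarrow> \<phi> t = 0) \<and>
      (\<exists>\<omega> \<theta> c. control T \<omega> \<and> \<theta> > 1 \<and>
         (\<forall>s t. 0 \<le> s \<and> s \<le> t \<and> t \<le> T \<longrightarrow>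
            norm (\<phi> t - \<phi> s - blinfun_apply (b s) (X s t) - apply2 (b' s) (XX s t)) \<le> c * \<omega> s t powr \<theta>)))"

definition C3b :: "('y::euclidean_space \<Rightarrow> ('x::euclidean_space \<Rightarrow>\<^sub>L 'y)) \<Rightarrow> bool" where
  "C3b f \<longleftrightarrow> (\<exists>Df D2f D3f.
      (\<forall>y. (f has_derivative blinfun_apply (Df y)) (at y)) \<and>
      (\<forall>y. (Df has_derivative blinfun_apply (D2f y)) (at y)) \<and>
      (\<forall>y. (D2f has_derivative blinfun_apply (D3f y)) (at y)) \<and>
      continuous_on UNIV D3f \<and>
      bounded (range f) \<and> bounded (range Df) \<and> bounded (range D2f) \<and> bounded (range D3f))"

definition sup_norm :: "('y::euclidean_space \<Rightarrow> ('x::euclidean_space \<Rightarrow>\<^sub>L 'y)) \<Rightarrow> real" where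
  "sup_norm f = (SUP y. norm (f y))"

definition lip_norm :: "('y::euclidean_space \<Rightarrow> ('x::euclidean_space \<Rightarrow>\<^sub>L 'y)) \<Rightarrow> real" where
  "lip_norm f = (SUP (y, y') \<in> {(y, y'). y \<noteq> y'}. norm (f y - f y') / dist y y')"

definition c_f :: "('y::euclidean_space \<Rightarrow> ('x::euclidean_space \<Rightarrow>\<^sub>L 'y)) \<Rightarrow> real" where
  "c_f f = sup_norm f + lip_norm f"

definition f_deriv_path :: "('y::euclidean_space \<Rightarrow> ('x::euclidean_space \<Rightarrow>\<^sub>L 'y)) \<Rightarrow> (real \<Rightarrow> 'y) \<Rightarrow> (real \<Rightarrow> ('x \<Rightarrow>\<^sub>L 'y))
    \<Rightarrow> real \<Rightarrow> ('x \<Rightarrow>\<^sub>L ('x \<Rightarrow>\<^sub>L 'y))" where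
  "f_deriv_path f z z' t = Blinfun (\<lambda>v. frechet_derivative f (at (z t)) (blinfun_apply (z' t) v))"

definition I_map :: "(real \<Rightarrow> real \<Rightarrow> 'x::euclidean_space) \<Rightarrow> (real \<Rightarrow> real \<Rightarrow> ('x \<Rightarrow>\<^sub>L 'x)) \<Rightarrow> real
    \<Rightarrow> ('y::euclidean_space \<Rightarrow> ('x \<Rightarrow>\<^sub>L 'y)) \<Rightarrow> 'y \<Rightarrow> (real \<Rightarrow> 'y) \<Rightarrow> (real \<Rightarrow> ('x \<Rightarrow>\<^sub>L 'y))
    \<Rightarrow> (real \<Rightarrow> 'y) \<times> (real \<Rightarrow> ('x \<Rightarrow>\<^sub>L 'y))" where
  "I_map X XX T f x0 z z' =
     ((\<lambda>t. x0 + rough_integral X XX T (\<lambda>s. f (z s)) (f_deriv_path f z z') t), (\<lambda>t. f (z t)))"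

definition ball_T :: "real \<Rightarrow> (real \<Rightarrow> real \<Rightarrow> 'x::euclidean_space) \<Rightarrow> ('y::euclidean_space \<Rightarrow> ('x \<Rightarrow>\<^sub>L 'y)) \<Rightarrow> real \<Rightarrow> real
    \<Rightarrow> ((real \<Rightarrow> 'y) \<times> (real \<Rightarrow> ('x \<Rightarrow>\<^sub>L 'y))) set" where
  "ball_T p X f T m = {(z, z'). controlled p X T z z' \<and>
      pvar p z 0 T \<le> m / c_f f \<and>
      var2 (p / 2) (remainder X z z') 0 T \<le> m\<^sup>2 \<and>
      pvar p z' 0 T \<le> m \<and>
      (\<forall>t\<in>{0..T}. norm (z' t) \<le> sup_norm f)}"

end

theory Submission
  imports Defs
begin

(* All estimates are expressed through one control w: w t is the variation on [0,t] of the sum of the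
   five p-variation densities of X, XX, z, z' and the remainder of z, each normalised by the bound the
   hypotheses give it.  Hence w is continuous, superadditive and w T <= 5, and every increment is
   bounded by a power of w.  Taylor expansion of f and Chen's relations bound the defect of the germ
   f(z s) X s t + f'(z s) z' s XX s t by e * w^(3/p) with 3/p > 1, so the sewing lemma (dyadic Riemann
   sums controlled by the maximal inequality) yields the rough integral with increments of order
   e * w^(1/p) and remainder of order e * w^(2/p).  Taking e small in terms of m bounds the p-variation
   of the integral by m / c_f and that of its remainder by m^2, while f(z) inherits the bound m from the
   Lipschitz constant of f. *)

section \<open>Partition sums\<close>

text \<open>Partitions of [s,t] are handled as finite sets of points rather than as the sorted lists of
  var_sum; var_sum_image relates the two.\<close>

definition next_point :: "real set \<Rightarrow> real \<Rightarrow> real" where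
  "next_point P x = Min {y\<in>P. x < y}"

definition psum :: "(real \<Rightarrow> real \<Rightarrow> 'e::comm_monoid_add) \<Rightarrow> real set \<Rightarrow> 'e" where
  "psum F P = (\<Sum>x\<in>{x\<in>P. x < Max P}. F x (next_point P x))"

definition fin_partition :: "real \<Rightarrow> real \<Rightarrow> real set \<Rightarrow> bool" where
  "fin_partition s t P \<longleftrightarrow> finite P \<and> P \<subseteq> {s..t} \<and> s \<in> P \<and> t \<in> P"

lemma next_point_props:
  assumes "finite P" "x \<in> P" "x < Max P"
  shows "next_point P x \<in> P" "x < next_point P x" "\<And>y. y \<in> P \<Longrightarrow> x < y \<Longrightarrow> next_point P x \<le> y"
proof -
  have "Max P \<in> P" using assms by (intro Max_in) auto
  then have "{y\<in>P. x < y} \<noteq> {}" using assms by auto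
  then show "next_point P x \<in> P" "x < next_point P x"
    using Min_in[of "{y\<in>P. x < y}"] assms(1) unfolding next_point_def by auto
  show "\<And>y. y \<in> P \<Longrightarrow> x < y \<Longrightarrow> next_point P x \<le> y" unfolding next_point_def using assms(1) by auto
qed

lemma next_point_eqI:
  assumes "finite P" "b \<in> P" "x < b" "\<And>y. y \<in> P \<Longrightarrow> x < y \<Longrightarrow> b \<le> y"
  shows "next_point P x = b"
  unfolding next_point_def using assms by (intro Min_eqI) auto

lemma psum_split:
  assumes "finite P" "u \<in> P"
  shows "psum F P = psum F {x\<in>P. x \<le> u} + psum F {x\<in>P. u \<le> x}"
proof -
  let ?A = "{x\<in>P. x \<le> u}" and ?B = "{x\<in>P. u \<le> x}"
  have MA: "Max ?A = u" and MB: "Max ?B = Max P" and uM: "u \<le> Max P"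
    using assms by (auto intro!: Max_eqI Max_in)
  have next_A: "next_point ?A x = next_point P x" if "x \<in> ?A" "x < u" for x
  proof -
    have x: "x \<in> P" "x < Max P" using that uM by auto
    note nx = next_point_props[OF assms(1) x]
    have "next_point P x \<le> u" using nx(3)[OF assms(2) that(2)] .
    then show ?thesis using nx assms(1) by (intro next_point_eqI) auto
  qed
  have next_B: "next_point ?B x = next_point P x" if "x \<in> ?B" "x < Max P" for x
    using next_point_props[OF assms(1), of x] that assms(1) by (intro next_point_eqI) auto
  have dom: "{x\<in>P. x < Max P} = {x\<in>?A. x < u} \<union> {x\<in>?B. x < Max P}" using uM by auto
  have "psum F P = (\<Sum>x\<in>{x\<in>?A. x < u}. F x (next_point P x)) + (\<Sum>x\<in>{x\<in>?B. x < Max P}. F x (next_point P x))"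
    unfolding psum_def dom by (rule sum.union_disjoint) (auto simp: assms(1))
  also have "(\<Sum>x\<in>{x\<in>?A. x < u}. F x (next_point P x)) = psum F ?A"
    unfolding psum_def MA by (rule sum.cong) (simp_all add: next_A)
  also have "(\<Sum>x\<in>{x\<in>?B. x < Max P}. F x (next_point P x)) = psum F ?B"
    unfolding psum_def MB by (rule sum.cong) (simp_all add: next_B)
  finally show ?thesis .
qed

lemma psum_singleton [simp]: "psum F {s} = 0"
proof -
  have "{x\<in>{s}. x < Max {s}} = {}" by auto
  then show ?thesis unfolding psum_def by (simp only: sum.empty)
qed

lemma psum_two:
  assumes "s < t" shows "psum F {s, t} = F s t"
proof -
  have "{x\<in>{s,t}. x < Max {s,t}} = {s}" "next_point {s,t} s = t"
    using assms by (auto intro: next_point_eqI)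
  then show ?thesis unfolding psum_def by simp
qed

lemma psum_insert_min:
  assumes "finite P" "P \<noteq> {}" "x < Min P"
  shows "psum F (insert x P) = F x (Min P) + psum F P"
proof -
  have "{y\<in>insert x P. y \<le> Min P} = {x, Min P}" "{y\<in>insert x P. Min P \<le> y} = P"
    using assms(3) Min_in[OF assms(1,2)] by (auto intro: antisym Min_le[OF assms(1)])
  moreover have "Min P \<in> insert x P" using Min_in[OF assms(1,2)] by simp
  ultimately show ?thesis
    using psum_split[of "insert x P" "Min P" F] psum_two[OF assms(3), of F] assms(1) by simp
qed

lemma psum_insert_max:
  assumes "finite P" "P \<noteq> {}" "Max P < x"
  shows "psum F (insert x P) = psum F P + F (Max P) x"
proof -
  have "{y\<in>insert x P. Max P \<le> y} = {Max P, x}" "{y\<in>insert x P. y \<le> Max P} = P"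
    using assms(3) Max_in[OF assms(1,2)] by (auto intro: antisym Max_ge[OF assms(1)])
  moreover have "Max P \<in> insert x P" using Max_in[OF assms(1,2)] by simp
  ultimately show ?thesis
    using psum_split[of "insert x P" "Max P" F] psum_two[OF assms(3), of F] assms(1) by simp
qed

lemma psum_increments:
  fixes w :: "real \<Rightarrow> 'e::ab_group_add"
  assumes "finite P" "P \<noteq> {}"
  shows "psum (\<lambda>a b. w b - w a) P = w (Max P) - w (Min P)"
  using assms
proof (induction P rule: finite_linorder_max_induct)
  case (insert b A)
  show ?case
  proof (cases "A = {}")
    case False
    have "Max A < b" "Min A < b" using insert.hyps Max_in[OF insert.hyps(1) False] Min_in[OF insert.hyps(1) False] by auto
    then have "Min (insert b A) = Min A" "Max (insert b A) = b"
      using Min_insert[OF insert.hyps(1) False] Max_insert[OF insert.hyps(1) False] by auto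
    then show ?thesis
      using psum_insert_max[OF insert.hyps(1) False \<open>Max A < b\<close>, of "\<lambda>a b. w b - w a"] insert.IH[OF False]
      by simp
  qed simp
qed simp

lemma psum_mono_on:
  fixes g h :: "real \<Rightarrow> real \<Rightarrow> real"
  assumes "finite P" "\<And>a b. a \<in> P \<Longrightarrow> b \<in> P \<Longrightarrow> a < b \<Longrightarrow> g a b \<le> h a b"
  shows "psum g P \<le> psum h P"
  unfolding psum_def using next_point_props[OF assms(1)] by (intro sum_mono assms(2)) auto

lemma psum_nonneg: fixes g :: "real \<Rightarrow> real \<Rightarrow> real" assumes "\<And>a b. 0 \<le> g a b" shows "0 \<le> psum g P"
  unfolding psum_def by (rule sum_nonneg) (use assms in auto)

lemma psum_mono: fixes g h :: "real \<Rightarrow> real \<Rightarrow> real" assumes "\<And>a b. g a b \<le> h a b" shows "psum g P \<le> psum h P"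
  unfolding psum_def by (rule sum_mono) (use assms in auto)

lemma psum_add: "psum (\<lambda>a b. g a b + h a b) P = psum g P + psum h P"
  unfolding psum_def by (simp add: sum.distrib)

lemma psum_cmult: fixes g :: "real \<Rightarrow> real \<Rightarrow> real" shows "psum (\<lambda>a b. c * g a b) P = c * psum g P"
  unfolding psum_def by (rule sum_distrib_left[symmetric])

lemma psum_divide: fixes g :: "real \<Rightarrow> real \<Rightarrow> real" shows "psum (\<lambda>a b. g a b / c) P = psum g P / c"
  unfolding psum_def by (rule sum_divide_distrib[symmetric])

lemma fin_partition_two: "s \<le> t \<Longrightarrow> fin_partition s t {s, t}"
  unfolding fin_partition_def by auto

lemma fin_partition_Min: "fin_partition s t P \<Longrightarrow> Min P = s"
  unfolding fin_partition_def by (intro Min_eqI) auto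

lemma fin_partition_Max: "fin_partition s t P \<Longrightarrow> Max P = t"
  unfolding fin_partition_def by (intro Max_eqI) auto

lemma fin_partition_union:
  assumes "fin_partition s u P1" "fin_partition u t P2"
  shows "fin_partition s t (P1 \<union> P2)" "{x\<in>P1 \<union> P2. x \<le> u} = P1" "{x\<in>P1 \<union> P2. u \<le> x} = P2"
proof -
  have P1: "finite P1" "P1 \<subseteq> {s..u}" "s \<in> P1" "u \<in> P1" and P2: "finite P2" "P2 \<subseteq> {u..t}" "u \<in> P2" "t \<in> P2"
    using assms unfolding fin_partition_def by auto
  have "s \<le> u" "u \<le> t" using P1(2,4) P2(2,4) by auto
  then have "P1 \<subseteq> {s..t}" "P2 \<subseteq> {s..t}" using P1(2) P2(2) by auto
  then show "fin_partition s t (P1 \<union> P2)" using P1 P2 unfolding fin_partition_def by auto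
  show "{x\<in>P1 \<union> P2. x \<le> u} = P1" "{x\<in>P1 \<union> P2. u \<le> x} = P2"
    using P1 P2 by (auto intro: antisym)
qed

lemma psum_union:
  assumes "fin_partition s u P1" "fin_partition u t P2"
  shows "psum g (P1 \<union> P2) = psum g P1 + psum g P2"
proof -
  have "finite (P1 \<union> P2)" "u \<in> P1 \<union> P2" using assms unfolding fin_partition_def by auto
  from psum_split[OF this, of g] show ?thesis using fin_partition_union[OF assms] by simp
qed

section \<open>Variation of a two-parameter function\<close>

lemma sorted_hd_last: "sorted xs \<Longrightarrow> x \<in> set xs \<Longrightarrow> hd xs \<le> x \<and> x \<le> (last xs :: 'a::linorder)"
  by (induction xs) (auto simp: last_in_set)

lemma var_sum_Cons:
  assumes "xs \<noteq> []"
  shows "var_sum q F (x # xs) = norm (F x (hd xs)) powr q + var_sum q F xs"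
proof -
  obtain n where n: "length xs = Suc n" using assms by (cases xs) auto
  have "var_sum q F (x#xs) = (\<Sum>i<Suc n. norm (F ((x#xs)!i) ((x#xs)!Suc i)) powr q)"
    unfolding var_sum_def using n by simp
  also have "\<dots> = norm (F x (xs!0)) powr q + (\<Sum>i<n. norm (F (xs!i) (xs!Suc i)) powr q)"
    by (subst sum.lessThan_Suc_shift) simp
  finally show ?thesis using n assms by (simp add: var_sum_def hd_conv_nth)
qed

lemma var_sum_eq_psum:
  assumes "sorted_wrt (<) xs" "xs \<noteq> []"
  shows "var_sum q F xs = psum (\<lambda>a b. norm (F a b) powr q) (set xs)"
  using assms
proof (induction xs)
  case (Cons a xs)
  show ?case
  proof (cases "xs = []")
    case False
    have "Min (set xs) = hd xs"
      using sorted_hd_last[OF strict_sorted_imp_sorted] Cons.prems False by (intro Min_eqI) auto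
    moreover have "a < Min (set xs)" using Cons.prems False by simp
    ultimately have ins: "psum G (set (a # xs)) = G a (hd xs) + psum G (set xs)" for G
      using psum_insert_min[of "set xs" a] False by simp
    then show ?thesis
      using var_sum_Cons[OF False, of q F a] Cons.IH[OF _ False] Cons.prems
        ins[of "\<lambda>a b. norm (F a b) powr q"] by simp
  qed (simp add: var_sum_def)
qed simp

lemma partitions_fin_partition:
  assumes "\<pi> \<in> partitions s t" shows "fin_partition s t (set \<pi>)"
proof -
  have "\<pi> \<noteq> []" "sorted \<pi>" "hd \<pi> = s" "last \<pi> = t"
    using assms strict_sorted_imp_sorted unfolding partitions_def by auto
  then show ?thesis unfolding fin_partition_def using sorted_hd_last[of \<pi>] by auto
qed

lemma sorted_list_of_set_partitions:
  assumes "fin_partition s t P"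
  shows "sorted_list_of_set P \<in> partitions s t"
proof -
  have P: "finite P" "P \<noteq> {}" using assms unfolding fin_partition_def by auto
  let ?l = "sorted_list_of_set P"
  have "hd ?l = s" using sorted_list_of_set_nonempty[OF P] fin_partition_Min[OF assms] by simp
  moreover have "last ?l = t"
    using sorted_hd_last[of ?l t] last_in_set[of ?l] assms P
    unfolding fin_partition_def by (auto intro: antisym)
  ultimately show ?thesis unfolding partitions_def using P by simp
qed

lemma var_sum_image:
  "var_sum q F ` partitions s t = psum (\<lambda>a b. norm (F a b) powr q) ` {P. fin_partition s t P}"
proof -
  have "\<pi> = sorted_list_of_set (set \<pi>)" if "\<pi> \<in> partitions s t" for \<pi>
    using that unfolding partitions_def by (simp add: sorted_list_of_set.idem_if_sorted_distinct strict_sorted_iff)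
  then have eq: "partitions s t = sorted_list_of_set ` {P. fin_partition s t P}"
    using partitions_fin_partition sorted_list_of_set_partitions by blast
  have "var_sum q F (sorted_list_of_set P) = psum (\<lambda>a b. norm (F a b) powr q) P"
    if "fin_partition s t P" for P
    using var_sum_eq_psum[of "sorted_list_of_set P"] that unfolding fin_partition_def by auto
  then show ?thesis unfolding eq image_image by (intro image_cong) auto
qed

definition variation :: "(real \<Rightarrow> real \<Rightarrow> real) \<Rightarrow> real \<Rightarrow> real \<Rightarrow> real" where
  "variation g s t = Sup (psum g ` {P. fin_partition s t P})"

definition bdd_variation :: "(real \<Rightarrow> real \<Rightarrow> real) \<Rightarrow> real \<Rightarrow> real \<Rightarrow> bool" where
  "bdd_variation g s t \<longleftrightarrow> bdd_above (psum g ` {P. fin_partition s t P})"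

lemma var2_eq_variation: "var2 q F s t = variation (\<lambda>a b. norm (F a b) powr q) s t powr (1/q)"
  unfolding var2_def variation_def var_sum_image by simp

lemma finite_var2_iff: "finite_var2 q F s t \<longleftrightarrow> bdd_variation (\<lambda>a b. norm (F a b) powr q) s t"
  unfolding finite_var2_def bdd_variation_def var_sum_image by simp

lemma psum_le_variation: "bdd_variation g s t \<Longrightarrow> fin_partition s t P \<Longrightarrow> psum g P \<le> variation g s t"
  unfolding bdd_variation_def variation_def by (rule cSup_upper) auto

lemma variation_le: "s \<le> t \<Longrightarrow> (\<And>P. fin_partition s t P \<Longrightarrow> psum g P \<le> c) \<Longrightarrow> variation g s t \<le> c"
  unfolding variation_def using fin_partition_two by (intro cSup_least) auto

lemma bdd_variationI: "(\<And>P. fin_partition s t P \<Longrightarrow> psum g P \<le> c) \<Longrightarrow> bdd_variation g s t"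
  unfolding bdd_variation_def by (rule bdd_aboveI2) auto

lemma variation_nonneg: "(\<And>a b. 0 \<le> g a b) \<Longrightarrow> bdd_variation g s t \<Longrightarrow> s \<le> t \<Longrightarrow> 0 \<le> variation g s t"
  using psum_le_variation[OF _ fin_partition_two, of g s t] psum_nonneg[of g] by (meson order_trans)

lemma le_variation: "bdd_variation g s t \<Longrightarrow> s < t \<Longrightarrow> g s t \<le> variation g s t"
  using psum_le_variation[OF _ fin_partition_two, of g s t] psum_two[of s t g] by simp

lemma bdd_variation_subinterval:
  assumes g: "\<And>a b. 0 \<le> g a b" and b: "bdd_variation g s t" and "s \<le> s'" "s' \<le> t'" "t' \<le> t"
  shows "bdd_variation g s' t'"
proof (rule bdd_variationI)
  fix P assume P: "fin_partition s' t' P"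
  have L: "fin_partition s t' ({s, s'} \<union> P)" by (rule fin_partition_union(1)[OF fin_partition_two[OF assms(3)] P])
  have "psum g ({s, s'} \<union> P \<union> {t', t}) \<le> variation g s t"
    by (rule psum_le_variation[OF b fin_partition_union(1)[OF L fin_partition_two[OF assms(5)]]])
  moreover have "psum g ({s, s'} \<union> P \<union> {t', t}) = psum g {s, s'} + psum g P + psum g {t', t}"
    using psum_union[OF L fin_partition_two[OF assms(5)], of g]
      psum_union[OF fin_partition_two[OF assms(3)] P, of g] by linarith
  ultimately show "psum g P \<le> variation g s t"
    using psum_nonneg[of g "{s, s'}", OF g] psum_nonneg[of g "{t', t}", OF g] by linarith
qed

lemma variation_superadditive:
  assumes g: "\<And>a b. 0 \<le> g a b" and b: "bdd_variation g s t" and u: "s \<le> u" "u \<le> t"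
  shows "variation g s u + variation g u t \<le> variation g s t"
proof -
  have "psum g P1 + psum g P2 \<le> variation g s t" if "fin_partition s u P1" "fin_partition u t P2" for P1 P2
    using psum_union[OF that, of g] psum_le_variation[OF b fin_partition_union(1)[OF that]] by simp
  then have "\<And>P1. fin_partition s u P1 \<Longrightarrow> variation g u t \<le> variation g s t - psum g P1"
    using u by (intro variation_le) (auto simp: algebra_simps)
  then have "variation g s u \<le> variation g s t - variation g u t"
    using u by (intro variation_le) (auto simp: algebra_simps)
  then show ?thesis by simp
qed

lemma psum_insert_between:
  fixes F :: "real \<Rightarrow> real \<Rightarrow> 'e::comm_monoid_add"
  assumes "finite P" "a \<in> P" "b \<in> P" "a < u" "u < b" "\<And>x. x \<in> P \<Longrightarrow> x \<le> a \<or> b \<le> x"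
  shows "psum F (insert u P) + F a b = psum F P + (F a u + F u b)"
proof -
  let ?L = "{x\<in>P. x \<le> a}" and ?R = "{x\<in>P. b \<le> x}"
  have R: "finite ?R" "?R \<noteq> {}" "Min ?R = b" using assms by (auto intro!: Min_eqI)
  have "{x\<in>P. a \<le> x} = insert a ?R" "{x\<in>insert u P. x \<le> a} = ?L"
      "{x\<in>insert u P. a \<le> x} = insert a (insert u ?R)"
    using assms by (auto intro: antisym)
  moreover have "psum F (insert a ?R) = F a b + psum F ?R"
    using psum_insert_min[OF R(1,2), of a F] R(3) assms(4,5) by simp
  moreover have "psum F (insert a (insert u ?R)) = F a u + (F u b + psum F ?R)"
  proof -
    have "Min (insert u ?R) = u" using R assms(5) by (simp add: Min_insert)
    then have "psum F (insert a (insert u ?R)) = F a u + psum F (insert u ?R)"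
      using psum_insert_min[of "insert u ?R" a F] R(1) assms(4) by simp
    also have "psum F (insert u ?R) = F u b + psum F ?R"
      using psum_insert_min[OF R(1,2), of u F] R(3) assms(5) by simp
    finally show ?thesis .
  qed
  ultimately show ?thesis
    using psum_split[OF assms(1,2), of F] psum_split[of "insert u P" a F] assms(1,2) by (simp add: ac_simps)
qed

lemma psum_le_psum_insert:
  fixes g :: "real \<Rightarrow> real \<Rightarrow> real"
  assumes "fin_partition s t P" "s \<le> u" "u \<le> t" "0 \<le> \<eta>" "\<And>a b. 0 \<le> g a b"
    and close: "\<And>a b. s \<le> a \<Longrightarrow> a < u \<Longrightarrow> u < b \<Longrightarrow> b \<le> t \<Longrightarrow> g a b \<le> g a u + \<eta>"
  shows "psum g P \<le> psum g (insert u P) + \<eta>"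
proof (cases "u \<in> P")
  case False
  have fin: "finite P" and sub: "P \<subseteq> {s..t}" and ends: "s \<in> P" "t \<in> P"
    using assms(1) unfolding fin_partition_def by auto
  let ?A = "{x\<in>P. x < u}" and ?B = "{x\<in>P. u < x}"
  have A: "finite ?A" "?A \<noteq> {}" and B: "finite ?B" "?B \<noteq> {}"
    using fin ends False assms(2,3) by (auto simp: order.order_iff_strict)
  define a b where "a = Max ?A" and "b = Min ?B"
  have a: "a \<in> P" "a < u" "s \<le> a" "\<And>x. x \<in> ?A \<Longrightarrow> x \<le> a"
    using Max_in[OF A] Max_ge[OF A(1)] sub unfolding a_def by auto
  have b: "b \<in> P" "u < b" "b \<le> t" "\<And>x. x \<in> ?B \<Longrightarrow> b \<le> x"
    using Min_in[OF B] Min_le[OF B(1)] sub unfolding b_def by auto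
  have "x \<le> a \<or> b \<le> x" if "x \<in> P" for x
    using a(4) b(4) that False by (cases "x < u") (auto simp: not_less order.order_iff_strict)
  then have "psum g (insert u P) + g a b = psum g P + (g a u + g u b)"
    by (rule psum_insert_between[OF fin a(1) b(1) a(2) b(2)])
  then show ?thesis using close[OF a(3,2) b(2,3)] assms(5)[of u b] by linarith
qed (use assms(4) in \<open>simp add: insert_absorb\<close>)

lemma variation_mono:
  assumes g: "\<And>a b. 0 \<le> g a b" and b: "bdd_variation g s t" and "s \<le> s'" "s' \<le> t'" "t' \<le> t"
  shows "variation g s' t' \<le> variation g s t"
proof -
  have b': "bdd_variation g s' t" by (rule bdd_variation_subinterval[OF g b]) (use assms in auto)
  have "variation g s' t' \<le> variation g s' t' + variation g t' t"
    using variation_nonneg[OF g bdd_variation_subinterval[OF g b']] assms by auto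
  also have "\<dots> \<le> variation g s' t" by (rule variation_superadditive[OF g b']) (use assms in auto)
  also have "\<dots> \<le> variation g s s' + variation g s' t"
    using variation_nonneg[OF g bdd_variation_subinterval[OF g b]] assms by auto
  also have "\<dots> \<le> variation g s t" by (rule variation_superadditive[OF g b]) (use assms in auto)
  finally show ?thesis .
qed

lemma compact_tri_set: "compact (tri_set T)"
proof -
  have "tri_set T = {p. 0 \<le> fst p} \<inter> {p. fst p \<le> snd p} \<inter> {p. snd p \<le> T}"
    unfolding tri_set_def by auto
  then have "closed (tri_set T)" by (simp add: closed_Int closed_Collect_le continuous_intros)
  moreover have "tri_set T \<subseteq> {0..T} \<times> {0..T}" unfolding tri_set_def by auto
  then have "bounded (tri_set T)" by (rule bounded_subset[OF bounded_Times[OF bounded_closed_interval bounded_closed_interval]])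
  ultimately show ?thesis using compact_eq_bounded_closed by blast
qed

lemma tri_set_uniformly_continuous:
  fixes h :: "real \<Rightarrow> real \<Rightarrow> 'b::metric_space"
  assumes "continuous_on (tri_set T) (\<lambda>(a,b). h a b)" "e > 0"
  obtains d where "d > 0" "\<And>a b a' b'. (a,b) \<in> tri_set T \<Longrightarrow> (a',b') \<in> tri_set T \<Longrightarrow>
    \<bar>a - a'\<bar> < d \<Longrightarrow> \<bar>b - b'\<bar> < d \<Longrightarrow> dist (h a b) (h a' b') < e"
proof -
  have "uniformly_continuous_on (tri_set T) (\<lambda>(a,b). h a b)"
    by (rule compact_uniformly_continuous[OF assms(1) compact_tri_set])
  then obtain d where d: "d > 0" "\<forall>x\<in>tri_set T. \<forall>x'\<in>tri_set T. dist x' x < d \<longrightarrow> dist ((\<lambda>(a,b). h a b) x') ((\<lambda>(a,b). h a b) x) < e"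
    using assms(2) unfolding uniformly_continuous_on_def by blast
  show ?thesis
  proof (rule that[of "d/2"])
    fix a b a' b' assume h: "(a,b) \<in> tri_set T" "(a',b') \<in> tri_set T" "\<bar>a - a'\<bar> < d/2" "\<bar>b - b'\<bar> < d/2"
    have "dist (a,b) (a',b') \<le> \<bar>a - a'\<bar> + \<bar>b - b'\<bar>"
      unfolding dist_Pair_Pair dist_real_def using sqrt_sum_squares_le_sum_abs[of "\<bar>a - a'\<bar>" "\<bar>b - b'\<bar>"] by simp
    then show "dist (h a b) (h a' b') < e" using d h by fastforce
  qed (use d in simp)
qed

section \<open>Continuity of the variation\<close>

locale continuous_bdd_variation =
  fixes g :: "real \<Rightarrow> real \<Rightarrow> real" and T :: real
  assumes nonneg: "\<And>a b. 0 \<le> g a b"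
    and continuous: "continuous_on (tri_set T) (\<lambda>(a,b). g a b)"
    and bdd: "bdd_variation g 0 T"
begin

lemma bdd_sub: "0 \<le> a \<Longrightarrow> a \<le> b \<Longrightarrow> b \<le> T \<Longrightarrow> bdd_variation g a b"
  using bdd_variation_subinterval[OF nonneg bdd] by blast

lemma variation_nonneg': "0 \<le> a \<Longrightarrow> a \<le> b \<Longrightarrow> b \<le> T \<Longrightarrow> 0 \<le> variation g a b"
  using variation_nonneg[OF nonneg bdd_sub] by blast

lemma superadditive: "0 \<le> a \<Longrightarrow> a \<le> b \<Longrightarrow> b \<le> c \<Longrightarrow> c \<le> T \<Longrightarrow> variation g a b + variation g b c \<le> variation g a c"
  using variation_superadditive[OF nonneg bdd_sub[of a c]] by auto

lemma variation_mono': "0 \<le> a \<Longrightarrow> a \<le> a' \<Longrightarrow> a' \<le> b' \<Longrightarrow> b' \<le> b \<Longrightarrow> b \<le> T \<Longrightarrow> variation g a' b' \<le> variation g a b"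
  using variation_mono[OF nonneg bdd_sub[of a b]] by auto

lemma variation_from_0_mono: "0 \<le> a \<Longrightarrow> a \<le> b \<Longrightarrow> b \<le> T \<Longrightarrow> variation g 0 a \<le> variation g 0 b"
  using superadditive[of 0 a b] variation_nonneg'[of a b] by auto

lemma exists_psum_gt:
  assumes "0 \<le> a" "a \<le> b" "b \<le> T" "y < variation g a b"
  obtains P where "fin_partition a b P" "y < psum g P"
proof -
  have ne: "psum g ` {P. fin_partition a b P} \<noteq> {}" using fin_partition_two[OF assms(2)] by blast
  have bd: "bdd_above (psum g ` {P. fin_partition a b P})" using bdd_sub[OF assms(1-3)] unfolding bdd_variation_def .
  show ?thesis using less_cSup_iff[OF ne bd, of y] assms(4) that unfolding variation_def by auto
qed

text \<open>Moving the first point of a nearly optimal partition towards t loses at most half of the sum,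
  by uniform continuity of g; iterating this shows that the variation over [t, t + \<delta>] tends to 0.\<close>

lemma shift_first_point:
  assumes "0 \<le> t" "t < b" "b \<le> T" "\<eta> > 0" "\<eta> < variation g t b"
  obtains t' where "t < t'" "t' < b" "\<eta>/2 < variation g t' b"
proof -
  obtain du where du: "du > 0" "\<And>a b a' b'. (a,b) \<in> tri_set T \<Longrightarrow> (a',b') \<in> tri_set T \<Longrightarrow>
      \<bar>a - a'\<bar> < du \<Longrightarrow> \<bar>b - b'\<bar> < du \<Longrightarrow> dist (g a b) (g a' b') < \<eta>/2"
    using tri_set_uniformly_continuous[OF continuous, of "\<eta>/2"] assms(4) by auto
  obtain P where P: "fin_partition t b P" "\<eta> < psum g P"
    using exists_psum_gt[of t b \<eta>] assms by auto
  define P0 where "P0 = P - {t}"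
  have P0: "finite P0" "P0 \<noteq> {}" "\<And>x. x \<in> P0 \<Longrightarrow> t < x \<and> x \<le> b" "b \<in> P0"
    using P(1) assms(2) unfolding P0_def fin_partition_def by force+
  define t1 where "t1 = Min P0"
  have t1: "t1 \<in> P0" "t < t1" "t1 \<le> b" using Min_in[OF P0(1,2)] P0(3) unfolding t1_def by auto
  define t' where "t' = min (t + du/2) ((t + t1)/2)"
  have t': "t < t'" "t' < t1" "t' - t < du" unfolding t'_def using t1 du(1) by (auto simp: min_def field_simps)
  have "P = insert t P0" using P(1) unfolding P0_def fin_partition_def by auto
  then have "psum g P = g t t1 + psum g P0"
    using psum_insert_min[OF P0(1,2), of t g] t1 unfolding t1_def by simp
  moreover have "psum g (insert t' P0) = g t' t1 + psum g P0"
    using psum_insert_min[OF P0(1,2), of t' g] t' unfolding t1_def by simp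
  moreover have "dist (g t' t1) (g t t1) < \<eta>/2"
    using du(2)[of t' t1 t t1] t' t1 assms unfolding tri_set_def by auto
  ultimately have "\<eta>/2 < psum g (insert t' P0)" using P(2) unfolding dist_real_def abs_less_iff by linarith
  also have "\<And>x. x \<in> P0 \<Longrightarrow> t1 \<le> x" unfolding t1_def using Min_le[OF P0(1)] by blast
  then have "insert t' P0 \<subseteq> {t'..b}" using P0(3) t' t1 by force
  then have "fin_partition t' b (insert t' P0)" using P0 unfolding fin_partition_def by auto
  then have "psum g (insert t' P0) \<le> variation g t' b"
    using t' t1 assms by (intro psum_le_variation bdd_sub) auto
  finally show ?thesis using that t' t1 by auto
qed

lemma shift_last_point:
  assumes "0 \<le> a" "a < t" "t \<le> T" "\<eta> > 0" "\<eta> < variation g a t"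
  obtains t' where "a < t'" "t' < t" "\<eta>/2 < variation g a t'"
proof -
  obtain du where du: "du > 0" "\<And>a b a' b'. (a,b) \<in> tri_set T \<Longrightarrow> (a',b') \<in> tri_set T \<Longrightarrow>
      \<bar>a - a'\<bar> < du \<Longrightarrow> \<bar>b - b'\<bar> < du \<Longrightarrow> dist (g a b) (g a' b') < \<eta>/2"
    using tri_set_uniformly_continuous[OF continuous, of "\<eta>/2"] assms(4) by auto
  obtain P where P: "fin_partition a t P" "\<eta> < psum g P"
    using exists_psum_gt[of a t \<eta>] assms by auto
  define P0 where "P0 = P - {t}"
  have P0: "finite P0" "P0 \<noteq> {}" "\<And>x. x \<in> P0 \<Longrightarrow> a \<le> x \<and> x < t" "a \<in> P0"
    using P(1) assms(2) unfolding P0_def fin_partition_def by force+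
  define tN where "tN = Max P0"
  have tN: "tN \<in> P0" "a \<le> tN" "tN < t" using Max_in[OF P0(1,2)] P0(3) unfolding tN_def by auto
  define t' where "t' = max (t - du/2) ((tN + t)/2)"
  have "t - du/2 \<le> t'" "(tN + t)/2 \<le> t'" "t' < t" unfolding t'_def using tN du(1) by auto
  then have t': "t' < t" "tN < t'" "t - t' < du" using du(1) by auto
  have "P = insert t P0" using P(1) unfolding P0_def fin_partition_def by auto
  then have "psum g P = psum g P0 + g tN t"
    using psum_insert_max[OF P0(1,2), of t g] tN unfolding tN_def by simp
  moreover have "psum g (insert t' P0) = psum g P0 + g tN t'"
    using psum_insert_max[OF P0(1,2), of t' g] t' unfolding tN_def by simp
  moreover have "dist (g tN t') (g tN t) < \<eta>/2"
    using du(2)[of tN t' tN t] t' tN assms unfolding tri_set_def by auto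
  ultimately have "\<eta>/2 < psum g (insert t' P0)" using P(2) unfolding dist_real_def abs_less_iff by linarith
  also have "\<And>x. x \<in> P0 \<Longrightarrow> x \<le> tN" unfolding tN_def using Max_ge[OF P0(1)] by blast
  then have "insert t' P0 \<subseteq> {a..t'}" using P0(3) t' tN by force
  then have "fin_partition a t' (insert t' P0)" using P0 unfolding fin_partition_def by auto
  then have "psum g (insert t' P0) \<le> variation g a t'"
    using t' tN assms by (intro psum_le_variation bdd_sub) auto
  finally show ?thesis using t' tN by (intro that) auto
qed

lemma variation_right_small:
  assumes "0 \<le> t" "t < T" "\<eta> > 0"
  obtains \<delta> where "\<delta> > 0" "t + \<delta> \<le> T" "variation g t (t + \<delta>) \<le> \<eta>"
proof -
  have "\<exists>\<delta>>0. t + \<delta> \<le> T \<and> variation g t (t + \<delta>) \<le> \<eta>"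
  proof (rule ccontr)
    assume "\<not> ?thesis"
    then have big: "\<eta> < variation g t b" if "t < b" "b \<le> T" for b
      using that by (auto dest: spec[of _ "b - t"])
    have claim: "real k * (\<eta>/2) \<le> variation g t b" if "t < b" "b \<le> T" for k :: nat and b
      using that
    proof (induction k arbitrary: b)
      case (Suc k)
      obtain t' where t': "t < t'" "t' < b" "\<eta>/2 < variation g t' b"
        using shift_first_point[of t b \<eta>] Suc.prems assms big by auto
      have "real k * (\<eta>/2) \<le> variation g t t'" using Suc.IH t' Suc.prems by auto
      then show ?case using superadditive[of t t' b] t' Suc.prems assms by (simp add: algebra_simps)
    qed (use variation_nonneg' assms in auto)
    obtain k :: nat where "variation g t T < real k * (\<eta>/2)"
      using ex_less_of_nat_mult[of "\<eta>/2"] assms by auto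
    then show False using claim[of T k] assms by linarith
  qed
  then show ?thesis using that by blast
qed

lemma variation_left_small:
  assumes "0 < t" "t \<le> T" "\<eta> > 0"
  obtains \<delta> where "\<delta> > 0" "\<delta> \<le> t" "variation g (t - \<delta>) t \<le> \<eta>"
proof -
  have "\<exists>\<delta>>0. \<delta> \<le> t \<and> variation g (t - \<delta>) t \<le> \<eta>"
  proof (rule ccontr)
    assume "\<not> ?thesis"
    then have big: "\<eta> < variation g a t" if "0 \<le> a" "a < t" for a
      using that by (auto dest: spec[of _ "t - a"])
    have claim: "real k * (\<eta>/2) \<le> variation g a t" if "0 \<le> a" "a < t" for k :: nat and a
      using that
    proof (induction k arbitrary: a)
      case (Suc k)
      obtain t' where t': "a < t'" "t' < t" "\<eta>/2 < variation g a t'"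
        using shift_last_point[of a t \<eta>] Suc.prems assms big by auto
      have "real k * (\<eta>/2) \<le> variation g t' t" using Suc.IH t' Suc.prems by auto
      then show ?case using superadditive[of a t' t] t' Suc.prems assms by (simp add: algebra_simps)
    qed (use variation_nonneg' assms in auto)
    obtain k :: nat where "variation g 0 t < real k * (\<eta>/2)"
      using ex_less_of_nat_mult[of "\<eta>/2"] assms by auto
    then show False using claim[of 0 k] assms by linarith
  qed
  then show ?thesis using that by blast
qed

lemma variation_from_0_insert:
  assumes "\<eta> > 0"
  obtains d where "d > 0" "\<And>u t. 0 \<le> u \<Longrightarrow> u \<le> t \<Longrightarrow> t \<le> T \<Longrightarrow> t - u < d \<Longrightarrow>
    variation g 0 t \<le> variation g 0 u + variation g u t + \<eta>"
proof -
  obtain d where d: "d > 0" "\<And>a b a' b'. (a,b) \<in> tri_set T \<Longrightarrow> (a',b') \<in> tri_set T \<Longrightarrow>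
      \<bar>a - a'\<bar> < d \<Longrightarrow> \<bar>b - b'\<bar> < d \<Longrightarrow> dist (g a b) (g a' b') < \<eta>"
    using tri_set_uniformly_continuous[OF continuous assms] by auto
  show thesis
  proof (rule that[OF d(1)])
    fix u t assume h: "0 \<le> u" "u \<le> t" "t \<le> T" "t - u < d"
    have close: "g a b \<le> g a u + \<eta>" if "0 \<le> a" "a < u" "u < b" "b \<le> t" for a b
      using d(2)[of a b a u] that h unfolding tri_set_def dist_real_def by auto
    show "variation g 0 t \<le> variation g 0 u + variation g u t + \<eta>"
    proof (rule variation_le)
      fix P assume P: "fin_partition 0 t P"
      then have fin: "finite P" and sub: "P \<subseteq> {0..t}" and ends: "0 \<in> P" "t \<in> P"
        unfolding fin_partition_def by auto
      have "fin_partition 0 u {x\<in>insert u P. x \<le> u}" "fin_partition u t {x\<in>insert u P. u \<le> x}"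
        using fin sub ends h unfolding fin_partition_def by auto
      then have "psum g {x\<in>insert u P. x \<le> u} \<le> variation g 0 u" "psum g {x\<in>insert u P. u \<le> x} \<le> variation g u t"
        using h by (auto intro!: psum_le_variation bdd_sub)
      then have "psum g (insert u P) \<le> variation g 0 u + variation g u t"
        using psum_split[of "insert u P" u g] fin by simp
      moreover have "psum g P \<le> psum g (insert u P) + \<eta>"
        using psum_le_psum_insert[OF P h(1,2)] assms nonneg close by auto
      ultimately show "psum g P \<le> variation g 0 u + variation g u t + \<eta>" by simp
    qed (use h in simp)
  qed
qed

lemma continuous_on_variation_from_0: "continuous_on {0..T} (\<lambda>t. variation g 0 t)"
  unfolding continuous_on_iff
proof (intro ballI allI impI)
  fix t \<epsilon> :: real assume t: "t \<in> {0..T}" and e: "\<epsilon> > 0"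
  define \<eta> where "\<eta> = \<epsilon>/3"
  have \<eta>: "\<eta> > 0" using e unfolding \<eta>_def by simp
  obtain dC where dC: "dC > 0" "\<And>u t'. 0 \<le> u \<Longrightarrow> u \<le> t' \<Longrightarrow> t' \<le> T \<Longrightarrow> t' - u < dC \<Longrightarrow>
      variation g 0 t' \<le> variation g 0 u + variation g u t' + \<eta>"
    using variation_from_0_insert[OF \<eta>] by auto
  obtain dA where dA: "dA > 0" "t < T \<Longrightarrow> t + dA \<le> T \<and> variation g t (t + dA) \<le> \<eta>"
  proof (cases "t < T")
    case True
    obtain \<delta> where "\<delta> > 0" "t + \<delta> \<le> T" "variation g t (t + \<delta>) \<le> \<eta>"
      by (rule variation_right_small[of t \<eta>]) (use True t \<eta> in auto)
    then show ?thesis by (intro that) auto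
  qed (rule that[of 1], simp_all)
  obtain dB where dB: "dB > 0" "0 < t \<Longrightarrow> dB \<le> t \<and> variation g (t - dB) t \<le> \<eta>"
  proof (cases "0 < t")
    case True
    obtain \<delta> where "\<delta> > 0" "\<delta> \<le> t" "variation g (t - \<delta>) t \<le> \<eta>"
      by (rule variation_left_small[of t \<eta>]) (use True t \<eta> in auto)
    then show ?thesis by (intro that) auto
  qed (rule that[of 1], simp_all)
  show "\<exists>d>0. \<forall>t'\<in>{0..T}. dist t' t < d \<longrightarrow> dist (variation g 0 t') (variation g 0 t) < \<epsilon>"
  proof (intro exI[of _ "min dC (min dA dB)"] conjI ballI impI)
    fix t' assume t': "t' \<in> {0..T}" "dist t' t < min dC (min dA dB)"
    then have dd: "\<bar>t' - t\<bar> < dC" "\<bar>t' - t\<bar> < dA" "\<bar>t' - t\<bar> < dB" by (auto simp: dist_real_def)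
    consider "t < t'" | "t' < t" | "t' = t" by linarith
    then show "dist (variation g 0 t') (variation g 0 t) < \<epsilon>"
    proof cases
      case 1
      have "variation g t t' \<le> variation g t (t + dA)" using t t' dd 1 dA by (intro variation_mono') auto
      then show ?thesis using dC(2)[of t t'] variation_from_0_mono[of t t'] dA t t' dd 1 e
        unfolding dist_real_def \<eta>_def by auto
    next
      case 2
      have "variation g t' t \<le> variation g (t - dB) t" using t t' dd 2 dB by (intro variation_mono') auto
      then show ?thesis using dC(2)[of t' t] variation_from_0_mono[of t' t] dB t t' dd 2 e
        unfolding dist_real_def \<eta>_def by auto
    qed (use e in simp)
  qed (use dA dB dC in simp)
qed

end

section \<open>The sewing lemma\<close>

definition sewing_const :: "real \<Rightarrow> real" where
  "sewing_const \<theta> = 2 / (1 - 2 powr (1 - \<theta>))"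

lemma sewing_const_pos: "\<theta> > 1 \<Longrightarrow> sewing_const \<theta> > 0"
  unfolding sewing_const_def by (simp add: powr_less_one)

lemma sewing_const_eq: "\<theta> > 1 \<Longrightarrow> sewing_const \<theta> * 2 powr (1 - \<theta>) + 2 = sewing_const \<theta>"
  unfolding sewing_const_def by (simp add: powr_less_one field_simps)

lemma next_point_upper:
  assumes "finite P" "x \<in> P" "u \<le> x" "x < Max P"
  shows "next_point {y\<in>P. u \<le> y} x = next_point P x"
  using next_point_props[OF assms(1,2,4)] assms by (intro next_point_eqI) auto

lemma psum_gap_split:
  assumes P: "fin_partition s t P" and jb: "j \<in> P" "b \<in> P" "s \<le> j" "j < b" "b \<le> t"
    and gap: "{x\<in>P. j \<le> x} = insert j {x\<in>P. b \<le> x}"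
  shows "fin_partition s j {x\<in>P. x \<le> j}" "fin_partition b t {x\<in>P. b \<le> x}"
    "card {x\<in>P. x \<le> j} < card P" "card {x\<in>P. b \<le> x} < card P"
    "psum F P = psum F {x\<in>P. x \<le> j} + (F j b + psum F {x\<in>P. b \<le> x})"
proof -
  have fin: "finite P" and bnd: "\<And>x. x \<in> P \<Longrightarrow> s \<le> x \<and> x \<le> t" and st: "s \<in> P" "t \<in> P"
    using P unfolding fin_partition_def by auto
  show parts: "fin_partition s j {x\<in>P. x \<le> j}" "fin_partition b t {x\<in>P. b \<le> x}"
    unfolding fin_partition_def using fin bnd st jb by auto
  have "t \<notin> {x\<in>P. x \<le> j}" "s \<notin> {x\<in>P. b \<le> x}" using jb by auto
  then have "{x\<in>P. x \<le> j} \<subset> P" "{x\<in>P. b \<le> x} \<subset> P" using st by auto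
  then show "card {x\<in>P. x \<le> j} < card P" "card {x\<in>P. b \<le> x} < card P"
    using psubset_card_mono[OF fin] by auto
  have "psum F (insert j {x\<in>P. b \<le> x}) = F j b + psum F {x\<in>P. b \<le> x}"
    using psum_insert_min[of "{x\<in>P. b \<le> x}" j F] fin jb fin_partition_Min[OF parts(2)] by auto
  then show "psum F P = psum F {x\<in>P. x \<le> j} + (F j b + psum F {x\<in>P. b \<le> x})"
    using psum_split[OF fin jb(1), of F] gap by simp
qed

lemma psum_peel_first:
  assumes P: "fin_partition s t P" and "s < t"
  shows "next_point P s \<in> P" "s < next_point P s" "next_point P s \<le> t"
    "fin_partition (next_point P s) t {x\<in>P. next_point P s \<le> x}"
    "card {x\<in>P. next_point P s \<le> x} < card P"
    "psum F P = F s (next_point P s) + psum F {x\<in>P. next_point P s \<le> x}"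
    "\<And>x. x \<in> {x\<in>P. next_point P s \<le> x} \<Longrightarrow> x < t \<Longrightarrow>
      next_point {x\<in>P. next_point P s \<le> x} x = next_point P x"
proof -
  let ?u = "next_point P s" and ?P' = "{x\<in>P. next_point P s \<le> x}"
  have fin: "finite P" and bnd: "\<And>x. x \<in> P \<Longrightarrow> s \<le> x \<and> x \<le> t" and st: "s \<in> P" "t \<in> P"
    using P unfolding fin_partition_def by auto
  have "s < Max P" using fin_partition_Max[OF P] \<open>s < t\<close> by simp
  note u = next_point_props[OF fin st(1) this]
  show "?u \<in> P" "s < ?u" "?u \<le> t" using u bnd by auto
  then show "fin_partition ?u t ?P'" using fin bnd st unfolding fin_partition_def by auto
  have "s \<notin> ?P'" using u(2) by auto
  then have "?P' \<subset> P" using st(1) by blast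
  then show "card ?P' < card P" by (rule psubset_card_mono[OF fin])
  have "{x\<in>P. x \<le> ?u} = {s, ?u}" using st u bnd by (force simp: order.order_iff_strict)
  then show "psum F P = F s ?u + psum F ?P'"
    using psum_split[OF fin u(1), of F] psum_two[OF u(2), of F] by simp
  show "next_point ?P' x = next_point P x" if "x \<in> ?P'" "x < t" for x
    using next_point_upper[OF fin, of x ?u] that fin_partition_Max[OF P] by auto
qed

lemma norm_diff4_le:
  fixes a b c d :: "'a::real_normed_vector"
  shows "norm (a + b - c - d) \<le> norm a + norm b + norm c + norm d"
proof -
  have "norm (a + b - c - d) \<le> norm (a + b - c) + norm d" by (rule norm_triangle_ineq4)
  also have "norm (a + b - c) \<le> norm (a + b) + norm c" by (rule norm_triangle_ineq4)
  also have "norm (a + b) \<le> norm a + norm b" by (rule norm_triangle_ineq)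
  finally show ?thesis by simp
qed

lemma powr_le_powr_minus_one_mult:
  fixes x \<epsilon> \<theta> :: real
  assumes "0 \<le> x" "x \<le> \<epsilon>" "\<theta> \<ge> 1"
  shows "x powr \<theta> \<le> \<epsilon> powr (\<theta> - 1) * x"
proof -
  have "x powr \<theta> = x powr (\<theta> - 1) * x" using powr_add[of x "\<theta> - 1" 1] assms(1) by simp
  also have "\<dots> \<le> \<epsilon> powr (\<theta> - 1) * x"
    by (rule mult_right_mono[OF powr_mono2]) (use assms in auto)
  finally show ?thesis .
qed

lemma powr_small:
  fixes a B e :: real
  assumes "a > 0" "B \<ge> 0" "e > 0"
  obtains \<epsilon> where "\<epsilon> > 0" "B * \<epsilon> powr a < e"
proof -
  define \<epsilon> where "\<epsilon> = (e / (B + 1)) powr (1 / a)"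
  have "\<epsilon> powr a = e / (B + 1)" unfolding \<epsilon>_def using assms by (simp add: powr_powr)
  then have "B * \<epsilon> powr a = B * (e / (B + 1))" by simp
  also have "\<dots> < e" using assms by (simp add: field_simps)
  finally have "B * \<epsilon> powr a < e" .
  moreover have "\<epsilon> > 0" unfolding \<epsilon>_def using assms by simp
  ultimately show ?thesis using that by blast
qed

definition dyadic_grid :: "real \<Rightarrow> nat \<Rightarrow> real set" where
  "dyadic_grid T n = (\<lambda>k. real k * T / 2^n) ` {..2^n}"

lemma dyadic_grid_mono: "n \<le> m \<Longrightarrow> dyadic_grid T n \<subseteq> dyadic_grid T m"
proof
  fix x assume nm: "n \<le> m" and "x \<in> dyadic_grid T n"
  then obtain k where k: "k \<le> 2^n" "x = real k * T / 2^n" unfolding dyadic_grid_def by auto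
  have "(2::real)^m = 2^n * 2^(m-n)" using nm by (simp add: power_add[symmetric])
  then have "x = real (k * 2^(m-n)) * T / 2^m" using k by (simp add: field_simps)
  moreover have "k * 2^(m-n) \<le> 2^m" using k(1) nm by (metis le_add_diff_inverse mult_le_mono1 power_add)
  ultimately have "x = (\<lambda>k. real k * T / 2^m) (k * 2^(m-n))" "k * 2^(m-n) \<in> {..2^m}" by auto
  then show "x \<in> dyadic_grid T m" unfolding dyadic_grid_def by (rule image_eqI)
qed

lemma dyadic_grid_point_above:
  assumes "T > 0" "0 \<le> x" "x < T"
  obtains z where "z \<in> dyadic_grid T n" "x < z" "z \<le> x + T / 2^n"
proof -
  define k where "k = nat \<lfloor>x * 2^n / T\<rfloor> + 1"
  have "real k = of_int \<lfloor>x * 2^n / T\<rfloor> + 1" unfolding k_def using assms by simp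
  then have "real k - 1 \<le> x * 2^n / T" "x * 2^n / T < real k"
    using of_int_floor_le[of "x * 2^n / T"] real_of_int_floor_add_one_gt[of "x * 2^n / T"] by linarith+
  then have z: "x < real k * T / 2^n" "real k * T / 2^n \<le> x + T / 2^n"
    using assms(1) by (simp_all add: field_simps)
  have "real k * T \<le> x * 2^n + T" using z(2) by (simp add: field_simps)
  moreover have "x * 2^n < T * 2^n" using assms by simp
  ultimately have "real k * T < T * 2^n + T" by linarith
  then have "real k * T < (2^n + 1) * T" by (simp add: algebra_simps)
  then have "real k < 2^n + 1" by (rule mult_right_less_imp_less) (use assms(1) in simp)
  then have "real k < real (2^n + 1)" by simp
  then have "k \<le> 2^n" unfolding of_nat_less_iff by simp
  then show ?thesis using that[of "real k * T / 2^n"] z unfolding dyadic_grid_def by auto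
qed

locale sewing =
  fixes Xi :: "real \<Rightarrow> real \<Rightarrow> 'e::banach" and w :: "real \<Rightarrow> real" and T K \<theta> :: real
  assumes w_mono: "\<And>a b. 0 \<le> a \<Longrightarrow> a \<le> b \<Longrightarrow> b \<le> T \<Longrightarrow> w a \<le> w b"
    and w_cont: "continuous_on {0..T} w"
    and \<theta>: "\<theta> > 1" and K: "K \<ge> 0" and T: "T > 0"
    and defect: "\<And>s u t. 0 \<le> s \<Longrightarrow> s \<le> u \<Longrightarrow> u \<le> t \<Longrightarrow> t \<le> T \<Longrightarrow>
        norm (Xi s t - Xi s u - Xi u t) \<le> K * (w t - w s) powr \<theta>"
begin

abbreviation C :: real where "C \<equiv> sewing_const \<theta>"

lemma CK_nonneg: "0 \<le> C * K"
  using sewing_const_pos[OF \<theta>] K by simp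

lemma Xi_diag: "0 \<le> s \<Longrightarrow> s \<le> T \<Longrightarrow> Xi s s = 0"
  using defect[of s s s] \<theta> by simp

text \<open>The gap [j,b] of P is chosen so that w gains at most half of its increment on each side
  of it; this is what makes the induction in the maximal inequality close.\<close>

lemma balanced_gap:
  assumes P: "fin_partition s t P" and "0 \<le> s" "s < t" "t \<le> T"
  obtains j b where "j \<in> P" "b \<in> P" "s \<le> j" "j < b" "b \<le> t"
    "{x\<in>P. j \<le> x} = insert j {x\<in>P. b \<le> x}"
    "w j - w s \<le> (w t - w s)/2" "w t - w b \<le> (w t - w s)/2"
proof -
  have fin: "finite P" and sub: "P \<subseteq> {s..t}" and st: "s \<in> P" "t \<in> P"
    using P unfolding fin_partition_def by auto
  define W where "W = w t - w s"
  have W0: "0 \<le> W" unfolding W_def using w_mono[of s t] assms by simp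
  define J where "J = {x\<in>P. x < t \<and> w x \<le> w s + W/2}"
  have J: "finite J" "s \<in> J" using fin st assms W0 unfolding J_def by auto
  define j where "j = Max J"
  have "j \<in> J" "\<And>x. x \<in> J \<Longrightarrow> x \<le> j" using Max_in[OF J(1)] Max_ge[OF J(1)] J(2) unfolding j_def by auto
  then have j: "j \<in> P" "j < t" "w j \<le> w s + W/2" "s \<le> j" "\<And>x. x \<in> J \<Longrightarrow> x \<le> j"
    using J(2) unfolding J_def by auto
  define B where "B = {x\<in>P. j < x}"
  have B: "finite B" "t \<in> B" using fin st j unfolding B_def by auto
  define b where "b = Min B"
  have "b \<in> B" "\<And>x. x \<in> B \<Longrightarrow> b \<le> x" using Min_in[OF B(1)] Min_le[OF B(1)] B(2) unfolding b_def by auto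
  then have b: "b \<in> P" "j < b" "b \<le> t" "\<And>x. x \<in> B \<Longrightarrow> b \<le> x"
    using B(2) unfolding B_def by auto
  have right: "w t - w b \<le> W/2"
  proof (cases "b = t")
    case False
    then have "b \<notin> J" using j(5) b by fastforce
    then have "w s + W/2 < w b" using b False unfolding J_def by auto
    then show ?thesis unfolding W_def by (simp add: field_simps)
  qed (use W0 in simp)
  have "{x\<in>P. j \<le> x} = insert j {x\<in>P. b \<le> x}"
    using j b unfolding B_def by (auto simp: order.order_iff_strict)
  then show ?thesis
    by (rule that[OF j(1) b(1) j(4) b(2) b(3)]) (use j(3) right in \<open>simp_all add: W_def field_simps\<close>)
qed

lemma halving_identity: "0 \<le> W \<Longrightarrow> 2 * (C * K * (W/2) powr \<theta>) + 2 * (K * W powr \<theta>) = C * K * W powr \<theta>"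
proof -
  assume "0 \<le> W"
  then have "2 * (W/2) powr \<theta> = 2 powr (1 - \<theta>) * W powr \<theta>" by (simp add: powr_divide powr_diff)
  then have "2 * (C * K * (W/2) powr \<theta>) + 2 * (K * W powr \<theta>) = K * W powr \<theta> * (C * 2 powr (1 - \<theta>) + 2)"
    by (simp add: algebra_simps)
  then show ?thesis using sewing_const_eq[OF \<theta>] by simp
qed

lemma maximal_inequality:
  "fin_partition s t P \<Longrightarrow> 0 \<le> s \<Longrightarrow> t \<le> T \<Longrightarrow> norm (psum Xi P - Xi s t) \<le> C * K * (w t - w s) powr \<theta>"
proof (induction "card P" arbitrary: P s t rule: less_induct)
  case less
  have sub: "P \<subseteq> {s..t}" and st: "s \<in> P" "t \<in> P" using less.prems unfolding fin_partition_def by auto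
  show ?case
  proof (cases "s = t")
    case True
    then have "P = {s}" using sub st by auto
    then show ?thesis using Xi_diag[of s] less.prems True CK_nonneg by simp
  next
    case False
    then have "s < t" using sub st by auto
    with less.prems obtain j b where jb: "j \<in> P" "b \<in> P" "s \<le> j" "j < b" "b \<le> t"
        "{x\<in>P. j \<le> x} = insert j {x\<in>P. b \<le> x}"
        "w j - w s \<le> (w t - w s)/2" "w t - w b \<le> (w t - w s)/2"
      by (auto elim: balanced_gap)
    define W PL PR where "W = w t - w s" and "PL = {x\<in>P. x \<le> j}" and "PR = {x\<in>P. b \<le> x}"
    note gap = psum_gap_split(1-4)[OF less.prems(1) jb(1-6), folded PL_def PR_def]
    have split: "psum Xi P = psum Xi PL + (Xi j b + psum Xi PR)"
      unfolding PL_def PR_def by (rule psum_gap_split(5)[OF less.prems(1) jb(1-6)])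
    have IH: "norm (psum Xi PL - Xi s j) \<le> C * K * (w j - w s) powr \<theta>"
      "norm (psum Xi PR - Xi b t) \<le> C * K * (w t - w b) powr \<theta>"
      using less.hyps[OF gap(3,1)] less.hyps[OF gap(4,2)] less.prems jb by auto
    have "psum Xi P - Xi s t = (psum Xi PL - Xi s j) + (psum Xi PR - Xi b t)
        - (Xi s t - Xi s j - Xi j t) - (Xi j t - Xi j b - Xi b t)"
      unfolding split by (simp add: algebra_simps)
    then have "norm (psum Xi P - Xi s t) \<le> norm (psum Xi PL - Xi s j) + norm (psum Xi PR - Xi b t)
        + norm (Xi s t - Xi s j - Xi j t) + norm (Xi j t - Xi j b - Xi b t)"
      by (simp only: norm_diff4_le)
    also have "\<dots> \<le> 2 * (C * K * (W/2) powr \<theta>) + 2 * (K * W powr \<theta>)"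
    proof -
      have mono: "0 \<le> w j - w s" "0 \<le> w t - w b" "0 \<le> w t - w j" "w t - w j \<le> W"
        using w_mono[of s j] w_mono[of b t] w_mono[of j t] less.prems jb unfolding W_def by auto
      have "K * (w t - w j) powr \<theta> \<le> K * W powr \<theta>"
        using mono \<theta> K by (intro mult_left_mono powr_mono2) auto
      moreover have "C * K * (w j - w s) powr \<theta> \<le> C * K * (W/2) powr \<theta>"
        "C * K * (w t - w b) powr \<theta> \<le> C * K * (W/2) powr \<theta>"
        using mono jb \<theta> CK_nonneg unfolding W_def by (intro mult_left_mono powr_mono2; simp)+
      moreover have "norm (Xi s t - Xi s j - Xi j t) \<le> K * W powr \<theta>"
        "norm (Xi j t - Xi j b - Xi b t) \<le> K * (w t - w j) powr \<theta>"
        using defect[of s j t] defect[of j b t] less.prems jb unfolding W_def by auto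
      ultimately show ?thesis using IH by linarith
    qed
    also have "\<dots> = C * K * (w t - w s) powr \<theta>"
      using halving_identity w_mono[of s t] less.prems \<open>s < t\<close> unfolding W_def by simp
    finally show ?thesis .
  qed
qed

lemma refinement_bound:
  "fin_partition s t P \<Longrightarrow> fin_partition s t Q \<Longrightarrow> P \<subseteq> Q \<Longrightarrow> 0 \<le> s \<Longrightarrow> t \<le> T \<Longrightarrow> 0 \<le> \<rho> \<Longrightarrow>
   (\<And>x. x \<in> P \<Longrightarrow> x < t \<Longrightarrow> w (next_point P x) - w x \<le> \<rho>) \<Longrightarrow>
   norm (psum Xi Q - psum Xi P) \<le> C * K * \<rho> powr (\<theta> - 1) * (w t - w s)"
proof (induction "card P" arbitrary: P Q s rule: less_induct)
  case less
  have st: "s \<in> P" and bndQ: "\<And>x. x \<in> Q \<Longrightarrow> s \<le> x \<and> x \<le> t" and finQ: "finite Q"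
    using less.prems(1,2) unfolding fin_partition_def by auto
  show ?case
  proof (cases "s = t")
    case True
    have "x = s" if "x \<in> Q" for x using bndQ[OF that] True by (auto intro: antisym)
    then have "P = {s}" "Q = {s}" using st less.prems(3) by auto
    then show ?thesis using True by simp
  next
    case False
    then have "s < t" using less.prems(1) unfolding fin_partition_def by force
    define u P' QL QR where "u = next_point P s" and "P' = {x\<in>P. u \<le> x}"
      and "QL = {x\<in>Q. x \<le> u}" and "QR = {x\<in>Q. u \<le> x}"
    note peel = psum_peel_first[OF less.prems(1) \<open>s < t\<close>, folded u_def, folded P'_def]
    have uQ: "u \<in> Q" using peel(1) less.prems(3) by auto
    have parts: "fin_partition s u QL" "fin_partition u t QR"
      using finQ bndQ less.prems(2) uQ peel(2,3) unfolding QL_def QR_def fin_partition_def by auto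
    have IH: "norm (psum Xi QR - psum Xi P') \<le> C * K * \<rho> powr (\<theta> - 1) * (w t - w u)"
      using less.hyps[OF peel(5,4) parts(2)] less.prems(3-7) peel(2,7) unfolding P'_def QR_def by auto
    have "0 \<le> w u - w s" "w u - w s \<le> \<rho>"
      using w_mono[of s u] less.prems(4,5) less.prems(7)[of s] st peel(2,3) \<open>s < t\<close> unfolding u_def by auto
    then have "C * K * (w u - w s) powr \<theta> \<le> C * K * (\<rho> powr (\<theta> - 1) * (w u - w s))"
      using \<theta> by (intro mult_left_mono[OF powr_le_powr_minus_one_mult CK_nonneg]) auto
    then have M: "norm (psum Xi QL - Xi s u) \<le> C * K * (\<rho> powr (\<theta> - 1) * (w u - w s))"
      using maximal_inequality[OF parts(1)] less.prems(4,5) peel(3) by auto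
    have "psum Xi Q = psum Xi QL + psum Xi QR"
      using psum_split[OF finQ uQ, of Xi] unfolding QL_def QR_def by simp
    then have "norm (psum Xi Q - psum Xi P) \<le> norm (psum Xi QL - Xi s u) + norm (psum Xi QR - psum Xi P')"
      using norm_triangle_ineq[of "psum Xi QL - Xi s u" "psum Xi QR - psum Xi P'"]
      unfolding peel(6) by (simp add: algebra_simps)
    also have "\<dots> \<le> C * K * \<rho> powr (\<theta> - 1) * (w t - w s)"
      using M IH by (simp add: algebra_simps)
    finally show ?thesis .
  qed
qed

definition dyadic_partition :: "nat \<Rightarrow> real \<Rightarrow> real \<Rightarrow> real set" where
  "dyadic_partition n s t = {s, t} \<union> {x\<in>dyadic_grid T n. s < x \<and> x < t}"

definition dyadic_sum :: "nat \<Rightarrow> real \<Rightarrow> real \<Rightarrow> 'e" where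
  "dyadic_sum n s t = psum Xi (dyadic_partition n s t)"

lemma dyadic_partition: "s \<le> t \<Longrightarrow> fin_partition s t (dyadic_partition n s t)"
  unfolding dyadic_partition_def dyadic_grid_def fin_partition_def by auto

lemma dyadic_partition_mono: "n \<le> m \<Longrightarrow> dyadic_partition n s t \<subseteq> dyadic_partition m s t"
  unfolding dyadic_partition_def using dyadic_grid_mono by blast

lemma dyadic_partition_split:
  assumes "s \<le> u" "u \<le> t"
  shows "{x\<in>dyadic_partition n s t \<union> {u}. x \<le> u} = dyadic_partition n s u"
    "{x\<in>dyadic_partition n s t \<union> {u}. u \<le> x} = dyadic_partition n u t"
  using assms unfolding dyadic_partition_def by auto

lemma dyadic_partition_mesh:
  assumes "0 \<le> s" "s \<le> t" "t \<le> T" "x \<in> dyadic_partition n s t" "x < t"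
  shows "next_point (dyadic_partition n s t) x - x \<le> T / 2^n"
proof -
  let ?D = "dyadic_partition n s t"
  have D: "fin_partition s t ?D" using dyadic_partition assms(2) .
  then have fin: "finite ?D" and x: "s \<le> x" unfolding fin_partition_def using assms(4) by auto
  note nx = next_point_props[OF fin assms(4)] 
  have "x < Max ?D" using fin_partition_Max[OF D] assms(5) by simp
  obtain z where z: "z \<in> dyadic_grid T n" "x < z" "z \<le> x + T / 2^n"
    using dyadic_grid_point_above[of T x n] T assms x by auto
  show ?thesis
  proof (cases "z < t")
    case True
    then have "z \<in> ?D" using z x unfolding dyadic_partition_def by auto
    then show ?thesis using nx(3)[OF \<open>x < Max ?D\<close> _ z(2)] z(3) by simp
  next
    case False
    then show ?thesis using nx(3)[OF \<open>x < Max ?D\<close>, of t] D z(3) assms(5)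
      unfolding fin_partition_def by simp
  qed
qed

lemma dyadic_mesh_small:
  assumes "\<epsilon> > 0"
  obtains N where "\<And>n s t x. N \<le> n \<Longrightarrow> 0 \<le> s \<Longrightarrow> s \<le> t \<Longrightarrow> t \<le> T \<Longrightarrow>
    x \<in> dyadic_partition n s t \<Longrightarrow> x < t \<Longrightarrow> w (next_point (dyadic_partition n s t) x) - w x \<le> \<epsilon>"
proof -
  have "uniformly_continuous_on {0..T} w" by (rule compact_uniformly_continuous[OF w_cont compact_Icc])
  then obtain d where d: "d > 0" "\<And>x x'. x \<in> {0..T} \<Longrightarrow> x' \<in> {0..T} \<Longrightarrow> dist x' x < d \<Longrightarrow> dist (w x') (w x) < \<epsilon>"
    using assms unfolding uniformly_continuous_on_def by metis
  obtain N where N: "T / d < 2^N" using real_arch_pow[of 2 "T/d"] by auto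
  show ?thesis
  proof (rule that)
    fix n s t x assume h: "N \<le> n" "0 \<le> s" "s \<le> t" "t \<le> T" "x \<in> dyadic_partition n s t" "x < t"
    let ?D = "dyadic_partition n s t"
    have D: "fin_partition s t ?D" by (rule dyadic_partition[OF h(3)])
    then have "finite ?D" "x < Max ?D" "s \<le> x" using h(5,6) fin_partition_Max[OF D] unfolding fin_partition_def by auto
    then have nx: "next_point ?D x \<in> ?D" "x < next_point ?D x" using next_point_props h(5) by blast+
    then have "next_point ?D x \<le> t" using D unfolding fin_partition_def by auto
    have "T / 2^n \<le> T / 2^N" using T h(1) by (intro divide_left_mono) (auto simp: power_increasing)
    also have "T / 2^N < d" using N d(1) by (simp add: field_simps)
    finally have "next_point ?D x - x < d" using dyadic_partition_mesh[OF h(2-6)] by linarith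
    then have "dist (w (next_point ?D x)) (w x) < \<epsilon>"
      using d(2) nx \<open>s \<le> x\<close> \<open>next_point ?D x \<le> t\<close> h by (auto simp: dist_real_def)
    then show "w (next_point ?D x) - w x \<le> \<epsilon>" by (simp add: dist_real_def)
  qed
qed

lemma dyadic_sum_close:
  assumes "e > 0"
  obtains N where "\<And>n s t Q. N \<le> n \<Longrightarrow> 0 \<le> s \<Longrightarrow> s \<le> t \<Longrightarrow> t \<le> T \<Longrightarrow> fin_partition s t Q \<Longrightarrow>
    dyadic_partition n s t \<subseteq> Q \<Longrightarrow> norm (psum Xi Q - dyadic_sum n s t) < e"
proof -
  have "0 \<le> C * K * (w T - w 0)" using CK_nonneg w_mono[of 0 T] T by simp
  then obtain \<epsilon> where \<epsilon>: "\<epsilon> > 0" "C * K * (w T - w 0) * \<epsilon> powr (\<theta> - 1) < e"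
    using powr_small[of "\<theta> - 1" "C * K * (w T - w 0)" e] \<theta> assms by auto
  obtain N where N: "\<And>n s t x. N \<le> n \<Longrightarrow> 0 \<le> s \<Longrightarrow> s \<le> t \<Longrightarrow> t \<le> T \<Longrightarrow>
      x \<in> dyadic_partition n s t \<Longrightarrow> x < t \<Longrightarrow> w (next_point (dyadic_partition n s t) x) - w x \<le> \<epsilon>"
    using dyadic_mesh_small[OF \<epsilon>(1)] by blast
  show ?thesis
  proof (rule that)
    fix n s t Q assume h: "N \<le> n" "0 \<le> s" "s \<le> t" "t \<le> T" "fin_partition s t Q" "dyadic_partition n s t \<subseteq> Q"
    have "norm (psum Xi Q - dyadic_sum n s t) \<le> C * K * \<epsilon> powr (\<theta> - 1) * (w t - w s)"
      unfolding dyadic_sum_def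
      by (rule refinement_bound[OF dyadic_partition h(5,6,2,4)]) (use h N \<epsilon> in auto)
    also have "\<dots> \<le> C * K * \<epsilon> powr (\<theta> - 1) * (w T - w 0)"
      using w_mono[of 0 s] w_mono[of t T] h CK_nonneg by (intro mult_left_mono) auto
    finally show "norm (psum Xi Q - dyadic_sum n s t) < e" using \<epsilon>(2) by (simp add: algebra_simps)
  qed
qed

lemma dyadic_sum_Cauchy:
  assumes "0 \<le> s" "s \<le> t" "t \<le> T"
  shows "Cauchy (\<lambda>n. dyadic_sum n s t)"
proof (rule metric_CauchyI)
  fix e :: real assume "e > 0"
  then obtain N where N: "\<And>n s t Q. N \<le> n \<Longrightarrow> 0 \<le> s \<Longrightarrow> s \<le> t \<Longrightarrow> t \<le> T \<Longrightarrow> fin_partition s t Q \<Longrightarrow>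
      dyadic_partition n s t \<subseteq> Q \<Longrightarrow> norm (psum Xi Q - dyadic_sum n s t) < e"
    by (rule dyadic_sum_close) blast
  have close: "dist (dyadic_sum m s t) (dyadic_sum n s t) < e" if "N \<le> n" "n \<le> m" for m n
    using N[OF that(1) assms dyadic_partition[OF assms(2)] dyadic_partition_mono[OF that(2)]]
    unfolding dyadic_sum_def dist_norm .
  show "\<exists>M. \<forall>m\<ge>M. \<forall>n\<ge>M. dist (dyadic_sum m s t) (dyadic_sum n s t) < e"
    using close by (metis dist_commute nle_le)
qed

definition sewn :: "real \<Rightarrow> real \<Rightarrow> 'e" where
  "sewn s t = lim (\<lambda>n. dyadic_sum n s t)"

lemma dyadic_sum_tendsto: "0 \<le> s \<Longrightarrow> s \<le> t \<Longrightarrow> t \<le> T \<Longrightarrow> (\<lambda>n. dyadic_sum n s t) \<longlonglongrightarrow> sewn s t"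
  unfolding sewn_def using dyadic_sum_Cauchy Cauchy_convergent_iff convergent_LIMSEQ_iff by blast

lemma sewn_close:
  assumes "0 \<le> s" "s \<le> t" "t \<le> T"
  shows "norm (sewn s t - Xi s t) \<le> C * K * (w t - w s) powr \<theta>"
proof (rule LIMSEQ_le_const2)
  show "(\<lambda>n. norm (dyadic_sum n s t - Xi s t)) \<longlonglongrightarrow> norm (sewn s t - Xi s t)"
    by (intro tendsto_intros dyadic_sum_tendsto assms)
qed (use maximal_inequality[OF dyadic_partition[OF assms(2)]] assms in \<open>auto simp: dyadic_sum_def\<close>)

lemma sewn_additive:
  assumes "0 \<le> s" "s \<le> u" "u \<le> t" "t \<le> T"
  shows "sewn s u + sewn u t = sewn s t"
proof -
  have "(\<lambda>n. dyadic_sum n s u + dyadic_sum n u t - dyadic_sum n s t) \<longlonglongrightarrow> 0"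
  proof (rule LIMSEQ_I)
    fix e :: real assume "e > 0"
    then obtain N where N: "\<And>n s t Q. N \<le> n \<Longrightarrow> 0 \<le> s \<Longrightarrow> s \<le> t \<Longrightarrow> t \<le> T \<Longrightarrow> fin_partition s t Q \<Longrightarrow>
        dyadic_partition n s t \<subseteq> Q \<Longrightarrow> norm (psum Xi Q - dyadic_sum n s t) < e"
      by (rule dyadic_sum_close) blast
    have "norm (dyadic_sum n s u + dyadic_sum n u t - dyadic_sum n s t - 0) < e" if "N \<le> n" for n
    proof -
      let ?Q = "dyadic_partition n s t \<union> {u}"
      have Q: "fin_partition s t ?Q" using dyadic_partition[of s t n] assms unfolding fin_partition_def by auto
      then have "psum Xi ?Q = dyadic_sum n s u + dyadic_sum n u t"
        using psum_split[of ?Q u Xi] dyadic_partition_split[OF assms(2,3), of n]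
        unfolding dyadic_sum_def fin_partition_def by simp
      then show ?thesis using N[OF that _ _ assms(4) Q] assms by auto
    qed
    then show "\<exists>N. \<forall>n\<ge>N. norm (dyadic_sum n s u + dyadic_sum n u t - dyadic_sum n s t - 0) < e" by blast
  qed
  moreover have "(\<lambda>n. dyadic_sum n s u + dyadic_sum n u t - dyadic_sum n s t) \<longlonglongrightarrow> sewn s u + sewn u t - sewn s t"
    by (intro tendsto_intros dyadic_sum_tendsto) (use assms in auto)
  ultimately show ?thesis using LIMSEQ_unique by fastforce
qed

lemma sewn_diag: "sewn 0 0 = 0"
proof -
  have "dyadic_partition n 0 0 = {0}" for n unfolding dyadic_partition_def by auto
  then have "(\<lambda>n. dyadic_sum n 0 0) = (\<lambda>n. 0)" unfolding dyadic_sum_def by simp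
  then show ?thesis using dyadic_sum_tendsto[of 0 0] T LIMSEQ_unique[OF _ tendsto_const] by fastforce
qed

definition sewn_path :: "real \<Rightarrow> 'e" where
  "sewn_path t = (if t \<in> {0..T} then sewn 0 t else 0)"

lemma sewn_path:
  shows "sewn_path 0 = 0" "\<And>t. t \<notin> {0..T} \<Longrightarrow> sewn_path t = 0"
    "\<And>s t. 0 \<le> s \<Longrightarrow> s \<le> t \<Longrightarrow> t \<le> T \<Longrightarrow>
      norm (sewn_path t - sewn_path s - Xi s t) \<le> C * K * (w t - w s) powr \<theta>"
proof -
  show "sewn_path 0 = 0" "\<And>t. t \<notin> {0..T} \<Longrightarrow> sewn_path t = 0"
    using sewn_diag unfolding sewn_path_def by auto
  fix s t assume st: "0 \<le> s" "s \<le> t" "t \<le> T"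
  then have "sewn_path t - sewn_path s = sewn s t"
    using sewn_additive[of 0 s t] unfolding sewn_path_def by (simp add: algebra_simps)
  then show "norm (sewn_path t - sewn_path s - Xi s t) \<le> C * K * (w t - w s) powr \<theta>"
    using sewn_close[OF st] by simp
qed

end

section \<open>Uniqueness of the rough integral\<close>

lemma control_small:
  assumes "control T \<omega>" "\<epsilon> > 0"
  obtains \<delta> where "\<delta> > 0" "\<And>s t. 0 \<le> s \<Longrightarrow> s \<le> t \<Longrightarrow> t \<le> T \<Longrightarrow> t - s < \<delta> \<Longrightarrow> \<omega> s t < \<epsilon>"
proof -
  have c: "continuous_on (tri_set T) (\<lambda>(s,t). \<omega> s t)" and z: "\<And>s. 0 \<le> s \<Longrightarrow> s \<le> T \<Longrightarrow> \<omega> s s = 0"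
    using assms(1) unfolding control_def by auto
  obtain d where d: "d > 0" "\<And>a b a' b'. (a,b) \<in> tri_set T \<Longrightarrow> (a',b') \<in> tri_set T \<Longrightarrow>
      \<bar>a - a'\<bar> < d \<Longrightarrow> \<bar>b - b'\<bar> < d \<Longrightarrow> dist (\<omega> a b) (\<omega> a' b') < \<epsilon>"
    using tri_set_uniformly_continuous[OF c assms(2)] by auto
  show ?thesis
  proof (rule that[OF d(1)])
    fix s t assume h: "0 \<le> s" "s \<le> t" "t \<le> T" "t - s < d"
    then have "dist (\<omega> s t) (\<omega> s s) < \<epsilon>" using d(2)[of s t s s] unfolding tri_set_def by auto
    then show "\<omega> s t < \<epsilon>" using z[of s] h by (simp add: dist_real_def)
  qed
qed

lemma control_sum_le:
  assumes "control T \<omega>" "mono a" "0 \<le> a 0" "a n \<le> T"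
  shows "(\<Sum>i<n. \<omega> (a i) (a (Suc i))) \<le> \<omega> (a 0) (a n)"
  using assms(4)
proof (induction n)
  case 0
  then show ?case using assms(1,3) unfolding control_def by auto
next
  case (Suc n)
  have "a 0 \<le> a n" "a n \<le> a (Suc n)" using assms(2) by (simp_all add: monoD)
  then have "\<omega> (a 0) (a n) + \<omega> (a n) (a (Suc n)) \<le> \<omega> (a 0) (a (Suc n))"
    using assms(1,3) Suc.prems unfolding control_def by auto
  moreover have "a n \<le> T" using Suc.prems assms(2) by (meson lessI less_imp_le monoD order_trans)
  ultimately show ?case using Suc.IH by simp
qed

lemma uniform_points:
  fixes t :: real and N :: nat
  assumes "0 \<le> t" "N > 0"
  shows "mono (\<lambda>i. real i * t / N)" "real i * t / N \<ge> 0" "i \<le> N \<Longrightarrow> real i * t / N \<le> t"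
    "real (Suc i) * t / N - real i * t / N = t / N"
proof -
  show "mono (\<lambda>i. real i * t / N)" using assms by (intro monoI divide_right_mono mult_right_mono) auto
  show "real i * t / N \<ge> 0" using assms by simp
  show "real (Suc i) * t / N - real i * t / N = t / N" by (simp add: diff_divide_distrib[symmetric] algebra_simps)
  assume "i \<le> N"
  then have "real i * t \<le> real N * t" using assms by (intro mult_right_mono) auto
  then show "real i * t / N \<le> t" using assms by (simp add: pos_divide_le_eq algebra_simps)
qed

lemma control_powr_sum_small:
  fixes t :: real
  assumes \<omega>: "control T \<omega>" and "\<theta> > 1" "e > 0" "0 \<le> t" "t \<le> T"
  shows "\<exists>\<delta>>0. \<forall>N::nat. N > 0 \<longrightarrow> t / N < \<delta> \<longrightarrow>
    (\<Sum>i<N. \<omega> (real i * t / N) (real (Suc i) * t / N) powr \<theta>) \<le> e"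
proof -
  have "0 \<le> \<omega> 0 t" using \<omega> assms unfolding control_def by auto
  then obtain \<epsilon> where \<epsilon>: "\<epsilon> > 0" "\<omega> 0 t * \<epsilon> powr (\<theta> - 1) < e"
    using powr_small[of "\<theta> - 1" "\<omega> 0 t" e] assms by auto
  obtain \<delta> where \<delta>: "\<delta> > 0" "\<And>s t. 0 \<le> s \<Longrightarrow> s \<le> t \<Longrightarrow> t \<le> T \<Longrightarrow> t - s < \<delta> \<Longrightarrow> \<omega> s t < \<epsilon>"
    using control_small[OF \<omega> \<epsilon>(1)] by blast
  show ?thesis
  proof (intro exI[of _ \<delta>] conjI allI impI \<delta>(1))
    fix N :: nat assume N: "N > 0" "t / N < \<delta>"
    define a where "a i = real i * t / real N" for i
    have a: "mono a" "a 0 = 0" "a N = t" "\<And>i. i \<le> N \<Longrightarrow> a i \<le> t" "\<And>i. 0 \<le> a i"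
      "\<And>i. a (Suc i) - a i = t / N"
      unfolding a_def using uniform_points[OF assms(4) N(1)] N(1) by auto
    have "\<omega> (a i) (a (Suc i)) powr \<theta> \<le> \<epsilon> powr (\<theta> - 1) * \<omega> (a i) (a (Suc i))" if "i < N" for i
    proof (rule powr_le_powr_minus_one_mult)
      have i: "a i \<le> a (Suc i)" "a (Suc i) \<le> T" "0 \<le> a i"
        using a(2) a(4)[of "Suc i"] that assms(5) monoD[OF a(1), of 0 i] monoD[OF a(1), of i "Suc i"] by auto
      then show "0 \<le> \<omega> (a i) (a (Suc i))" using \<omega> unfolding control_def by auto
      show "\<omega> (a i) (a (Suc i)) \<le> \<epsilon>" using \<delta>(2)[OF i(3,1,2)] a(6) N by simp
    qed (use assms in simp)
    then have "(\<Sum>i<N. \<omega> (a i) (a (Suc i)) powr \<theta>) \<le> \<epsilon> powr (\<theta> - 1) * (\<Sum>i<N. \<omega> (a i) (a (Suc i)))"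
      by (auto simp: sum_distrib_left intro: sum_mono)
    also have "\<dots> \<le> \<epsilon> powr (\<theta> - 1) * \<omega> 0 t"
      using control_sum_le[OF \<omega> a(1), of N] a assms by (intro mult_left_mono) auto
    finally show "(\<Sum>i<N. \<omega> (real i * t / N) (real (Suc i) * t / N) powr \<theta>) \<le> e"
      using \<epsilon>(2) unfolding a_def by (simp add: mult.commute)
  qed
qed

definition integrates_germ :: "real \<Rightarrow> (real \<Rightarrow> real \<Rightarrow> 'e::real_normed_vector) \<Rightarrow> (real \<Rightarrow> 'e) \<Rightarrow> bool" where
  "integrates_germ T Xi \<phi> \<longleftrightarrow> \<phi> 0 = 0 \<and> (\<forall>t. t \<notin> {0..T} \<longrightarrow> \<phi> t = 0) \<and>
      (\<exists>\<omega> \<theta> c. control T \<omega> \<and> \<theta> > 1 \<and>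
         (\<forall>s t. 0 \<le> s \<and> s \<le> t \<and> t \<le> T \<longrightarrow> norm (\<phi> t - \<phi> s - Xi s t) \<le> c * \<omega> s t powr \<theta>))"

lemma exists_fine_uniform_partition:
  fixes t \<delta> :: real
  assumes "0 \<le> t" "\<delta> > 0"
  obtains N :: nat where "N > 0" "t / N < \<delta>"
proof -
  obtain N :: nat where N: "t / \<delta> < N" using reals_Archimedean2 by blast
  moreover have "0 \<le> t / \<delta>" using assms by simp
  ultimately have "N > 0" by (simp add: of_nat_0_less_iff[symmetric] del: of_nat_0_less_iff)
  moreover have "t < \<delta> * N" using N assms(2) by (simp add: pos_divide_less_eq mult.commute)
  then have "t / N < \<delta>" using \<open>N > 0\<close> by (simp add: pos_divide_less_eq)
  ultimately show ?thesis using that by blast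
qed

lemma superlinear_increments_vanish:
  fixes h :: "real \<Rightarrow> 'e::real_normed_vector"
  assumes \<omega>1: "control T \<omega>1" "\<theta>1 > 1" and \<omega>2: "control T \<omega>2" "\<theta>2 > 1"
    and c: "0 \<le> c1" "0 \<le> c2" and h0: "h 0 = 0" and t: "0 \<le> t" "t \<le> T"
    and incr: "\<And>s t. 0 \<le> s \<Longrightarrow> s \<le> t \<Longrightarrow> t \<le> T \<Longrightarrow>
      norm (h t - h s) \<le> c1 * \<omega>1 s t powr \<theta>1 + c2 * \<omega>2 s t powr \<theta>2"
  shows "h t = 0"
proof -
  have "norm (h t) \<le> e" if "e > 0" for e
  proof -
    have e_pos: "e / (2 * (c1 + 1)) > 0" "e / (2 * (c2 + 1)) > 0" using that c by simp_all
    obtain \<delta>1 where \<delta>1: "\<delta>1 > 0" "\<forall>N::nat. N > 0 \<longrightarrow> t / N < \<delta>1 \<longrightarrow>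
        (\<Sum>i<N. \<omega>1 (real i * t / N) (real (Suc i) * t / N) powr \<theta>1) \<le> e / (2 * (c1 + 1))"
      using control_powr_sum_small[OF \<omega>1 e_pos(1) t] by blast
    obtain \<delta>2 where \<delta>2: "\<delta>2 > 0" "\<forall>N::nat. N > 0 \<longrightarrow> t / N < \<delta>2 \<longrightarrow>
        (\<Sum>i<N. \<omega>2 (real i * t / N) (real (Suc i) * t / N) powr \<theta>2) \<le> e / (2 * (c2 + 1))"
      using control_powr_sum_small[OF \<omega>2 e_pos(2) t] by blast
    obtain N :: nat where N: "N > 0" "t / N < min \<delta>1 \<delta>2"
      using exists_fine_uniform_partition[of t "min \<delta>1 \<delta>2"] t \<delta>1(1) \<delta>2(1) by auto
    define a where "a i = real i * t / real N" for i
    have a: "mono a" "a 0 = 0" "a N = t" "\<And>i. i \<le> N \<Longrightarrow> a i \<le> t" "\<And>i. 0 \<le> a i"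
      unfolding a_def using uniform_points[of t N] t N(1) by auto
    have "norm (h t) = norm (\<Sum>i<N. h (a (Suc i)) - h (a i))"
      using sum_lessThan_telescope[of "\<lambda>i. h (a i)" N] h0 a(2,3) by simp
    also have "\<dots> \<le> (\<Sum>i<N. norm (h (a (Suc i)) - h (a i)))" by (rule norm_sum)
    also have "\<dots> \<le> (\<Sum>i<N. c1 * \<omega>1 (a i) (a (Suc i)) powr \<theta>1 + c2 * \<omega>2 (a i) (a (Suc i)) powr \<theta>2)"
    proof (rule sum_mono)
      fix i assume "i \<in> {..<N}"
      then have "0 \<le> a i" "a i \<le> a (Suc i)" "a (Suc i) \<le> T"
        using monoD[OF a(1), of i "Suc i"] a(4)[of "Suc i"] a(5)[of i] t by auto
      then show "norm (h (a (Suc i)) - h (a i)) \<le> c1 * \<omega>1 (a i) (a (Suc i)) powr \<theta>1 + c2 * \<omega>2 (a i) (a (Suc i)) powr \<theta>2"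
        by (rule incr)
    qed
    also have "\<dots> \<le> c1 * (e / (2 * (c1 + 1))) + c2 * (e / (2 * (c2 + 1)))"
      unfolding sum.distrib sum_distrib_left[symmetric] a_def using \<delta>1(2) \<delta>2(2) N c
      by (intro add_mono mult_left_mono) simp_all
    also have "\<dots> \<le> e"
    proof -
      have half: "c * (e / (2 * (c + 1))) \<le> e / 2" if "0 \<le> c" for c :: real
        using that \<open>e > 0\<close> by (simp add: field_simps)
      show ?thesis using half[OF c(1)] half[OF c(2)] by linarith
    qed
    finally show ?thesis .
  qed
  then have "norm (h t) \<le> 0" using field_le_epsilon[of "norm (h t)" 0] by simp
  then show ?thesis by simp
qed

lemma integrates_germ_unique:
  assumes "integrates_germ T Xi \<phi>1" "integrates_germ T Xi \<phi>2"
  shows "\<phi>1 = \<phi>2"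
proof
  fix t
  obtain \<omega>1 \<theta>1 c1 where \<omega>1: "control T \<omega>1" "\<theta>1 > 1"
    and bd1: "\<And>s t. 0 \<le> s \<Longrightarrow> s \<le> t \<Longrightarrow> t \<le> T \<Longrightarrow> norm (\<phi>1 t - \<phi>1 s - Xi s t) \<le> c1 * \<omega>1 s t powr \<theta>1"
    using assms(1) unfolding integrates_germ_def by blast
  obtain \<omega>2 \<theta>2 c2 where \<omega>2: "control T \<omega>2" "\<theta>2 > 1"
    and bd2: "\<And>s t. 0 \<le> s \<Longrightarrow> s \<le> t \<Longrightarrow> t \<le> T \<Longrightarrow> norm (\<phi>2 t - \<phi>2 s - Xi s t) \<le> c2 * \<omega>2 s t powr \<theta>2"
    using assms(2) unfolding integrates_germ_def by blast
  have "norm ((\<phi>1 t - \<phi>2 t) - (\<phi>1 s - \<phi>2 s)) \<le> \<bar>c1\<bar> * \<omega>1 s t powr \<theta>1 + \<bar>c2\<bar> * \<omega>2 s t powr \<theta>2"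
    if "0 \<le> s" "s \<le> t" "t \<le> T" for s t
  proof -
    have "norm ((\<phi>1 t - \<phi>2 t) - (\<phi>1 s - \<phi>2 s)) \<le> c1 * \<omega>1 s t powr \<theta>1 + c2 * \<omega>2 s t powr \<theta>2"
      using norm_triangle_ineq4[of "\<phi>1 t - \<phi>1 s - Xi s t" "\<phi>2 t - \<phi>2 s - Xi s t"] bd1[OF that] bd2[OF that]
      by (simp add: algebra_simps)
    also have "\<dots> \<le> \<bar>c1\<bar> * \<omega>1 s t powr \<theta>1 + \<bar>c2\<bar> * \<omega>2 s t powr \<theta>2"
      by (intro add_mono mult_right_mono) auto
    finally show ?thesis .
  qed
  moreover have "\<phi>1 0 - \<phi>2 0 = 0" using assms unfolding integrates_germ_def by simp
  ultimately have "t \<in> {0..T} \<Longrightarrow> \<phi>1 t - \<phi>2 t = 0"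
    using superlinear_increments_vanish[OF \<omega>1 \<omega>2, of "\<bar>c1\<bar>" "\<bar>c2\<bar>" "\<lambda>t. \<phi>1 t - \<phi>2 t" t] by auto
  then show "\<phi>1 t = \<phi>2 t" using assms unfolding integrates_germ_def by (cases "t \<in> {0..T}") auto
qed

lemma rough_integral_eqI:
  assumes "integrates_germ T (\<lambda>s t. blinfun_apply (b s) (X s t) + apply2 (b' s) (XX s t)) \<phi>"
  shows "rough_integral X XX T b b' = \<phi>"
proof -
  let ?P = "\<lambda>\<psi>. \<psi> 0 = 0 \<and> (\<forall>t. t \<notin> {0..T} \<longrightarrow> \<psi> t = 0) \<and>
      (\<exists>\<omega> \<theta> c. control T \<omega> \<and> \<theta> > 1 \<and>
         (\<forall>s t. 0 \<le> s \<and> s \<le> t \<and> t \<le> T \<longrightarrow>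
            norm (\<psi> t - \<psi> s - blinfun_apply (b s) (X s t) - apply2 (b' s) (XX s t)) \<le> c * \<omega> s t powr \<theta>))"
  have eq: "?P \<psi> \<longleftrightarrow> integrates_germ T (\<lambda>s t. blinfun_apply (b s) (X s t) + apply2 (b' s) (XX s t)) \<psi>" for \<psi>
    unfolding integrates_germ_def by (simp add: algebra_simps)
  show ?thesis unfolding rough_integral_def
  proof (rule the_equality)
    show "?P \<phi>" using eq assms by blast
    show "\<psi> = \<phi>" if "?P \<psi>" for \<psi> using integrates_germ_unique[OF _ assms] eq that by blast
  qed
qed

section \<open>Tensors and the vector field\<close>

lemma tensor_apply: "blinfun_apply (tensor a c) v = (c \<bullet> v) *\<^sub>R a"
  unfolding tensor_def by (subst bounded_linear_Blinfun_apply) (auto intro!: bounded_linear_intros)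

lemma apply2_add: "apply2 g (M + N) = apply2 g M + apply2 g N"
  unfolding apply2_def by (simp add: blinfun.add_left inner_add_right scaleR_add_left sum.distrib)

lemma apply2_diff_left: "apply2 (g - h) M = apply2 g M - apply2 h M"
  unfolding apply2_def by (simp add: blinfun.diff_left scaleR_diff_right sum_subtractf)

lemma apply2_zero_left: "apply2 0 M = 0"
  unfolding apply2_def by simp

lemma apply2_tensor: "apply2 g (tensor a c) = blinfun_apply (blinfun_apply g a) c"
proof -
  have "blinfun_apply (blinfun_apply g a) c = (\<Sum>i\<in>Basis. (a \<bullet> i) *\<^sub>R blinfun_apply (blinfun_apply g i) c)"
    by (subst euclidean_representation[symmetric, of a])
       (simp add: blinfun.sum_right blinfun.sum_left blinfun.scaleR_right blinfun.scaleR_left)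
  also have "\<dots> = (\<Sum>i\<in>Basis. (a \<bullet> i) *\<^sub>R (\<Sum>j\<in>Basis. (c \<bullet> j) *\<^sub>R blinfun_apply (blinfun_apply g i) j))"
    by (subst euclidean_representation[symmetric, of c]) (simp add: blinfun.sum_right blinfun.scaleR_right)
  also have "\<dots> = apply2 g (tensor a c)"
    unfolding apply2_def tensor_apply by (simp add: scaleR_sum_right inner_commute mult.commute)
  finally show ?thesis by simp
qed

lemma norm_apply2_le:
  fixes M :: "'x::euclidean_space \<Rightarrow>\<^sub>L 'x"
  shows "norm (apply2 g M) \<le> real (DIM('x))^2 * norm g * norm M"
proof -
  have entry: "norm ((i \<bullet> blinfun_apply M j) *\<^sub>R blinfun_apply (blinfun_apply g i) j) \<le> norm g * norm M"
    if "i \<in> Basis" "j \<in> Basis" for i j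
  proof -
    have "\<bar>i \<bullet> blinfun_apply M j\<bar> \<le> norm M"
      using Cauchy_Schwarz_ineq2[of i "blinfun_apply M j"] norm_blinfun[of M j] that by simp
    moreover have "norm (blinfun_apply (blinfun_apply g i) j) \<le> norm g"
      using norm_blinfun[of "blinfun_apply g i" j] norm_blinfun[of g i] that
      by (simp add: order_trans)
    ultimately show ?thesis by (simp add: mult_mono mult.commute)
  qed
  have "norm (apply2 g M) \<le> (\<Sum>i\<in>Basis. \<Sum>j\<in>Basis. norm ((i \<bullet> blinfun_apply M j) *\<^sub>R blinfun_apply (blinfun_apply g i) j))"
    unfolding apply2_def by (rule order_trans[OF norm_sum sum_mono[OF norm_sum]])
  also have "\<dots> \<le> (\<Sum>i\<in>(Basis::'x set). \<Sum>j\<in>(Basis::'x set). norm g * norm M)"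
    by (intro sum_mono entry)
  also have "\<dots> = real (DIM('x))^2 * norm g * norm M" by (simp add: power2_eq_square)
  finally show ?thesis .
qed

lemma bdd_above_range_norm: "bounded (range F) \<Longrightarrow> bdd_above (range (\<lambda>y. norm (F y)))"
  unfolding bounded_iff bdd_above_def by auto

locale C2b_field =
  fixes f :: "'y::euclidean_space \<Rightarrow> ('x::euclidean_space \<Rightarrow>\<^sub>L 'y)"
    and Df :: "'y \<Rightarrow> ('y \<Rightarrow>\<^sub>L ('x \<Rightarrow>\<^sub>L 'y))"
    and D2f :: "'y \<Rightarrow> ('y \<Rightarrow>\<^sub>L ('y \<Rightarrow>\<^sub>L ('x \<Rightarrow>\<^sub>L 'y)))"
  assumes f_deriv: "\<And>y. (f has_derivative blinfun_apply (Df y)) (at y)"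
    and Df_deriv: "\<And>y. (Df has_derivative blinfun_apply (D2f y)) (at y)"
    and f_bounded: "bounded (range f)" and Df_bounded: "bounded (range Df)"
    and D2f_bounded: "bounded (range D2f)"
begin

definition B1 :: real where "B1 = (SUP y. norm (Df y))"
definition B2 :: real where "B2 = (SUP y. norm (D2f y))"

lemma norm_Df_le: "norm (Df y) \<le> B1"
  unfolding B1_def using bdd_above_range_norm[OF Df_bounded] by (intro cSUP_upper) auto

lemma norm_D2f_le: "norm (D2f y) \<le> B2"
  unfolding B2_def using bdd_above_range_norm[OF D2f_bounded] by (intro cSUP_upper) auto

lemma B1_nonneg: "0 \<le> B1" using norm_Df_le[of 0] norm_ge_zero order_trans by blast
lemma B2_nonneg: "0 \<le> B2" using norm_D2f_le[of 0] norm_ge_zero order_trans by blast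

lemma norm_f_le: "norm (f y) \<le> sup_norm f"
  unfolding sup_norm_def using bdd_above_range_norm[OF f_bounded] by (intro cSUP_upper) auto

lemma sup_norm_nonneg: "0 \<le> sup_norm f" using norm_f_le[of 0] norm_ge_zero order_trans by blast

lemma f_lipschitz: "norm (f a - f b) \<le> B1 * norm (a - b)"
  by (rule differentiable_bound[where S=UNIV and f'="\<lambda>y. blinfun_apply (Df y)"])
     (auto intro: has_derivative_at_withinI f_deriv simp: norm_blinfun.rep_eq[symmetric] norm_Df_le)

lemma Df_lipschitz: "norm (Df a - Df b) \<le> B2 * norm (a - b)"
  by (rule differentiable_bound[where S=UNIV and f'="\<lambda>y. blinfun_apply (D2f y)"])
     (auto intro: has_derivative_at_withinI Df_deriv simp: norm_blinfun.rep_eq[symmetric] norm_D2f_le)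

lemma taylor_remainder: "norm (f b - f a - blinfun_apply (Df a) (b - a)) \<le> B2 * norm (b - a)^2"
proof -
  let ?S = "cball a (norm (b - a))"
  have "onorm (blinfun_apply (Df x) - blinfun_apply (Df a)) \<le> B2 * norm (b - a)" if "x \<in> ?S" for x
  proof -
    have "onorm (blinfun_apply (Df x) - blinfun_apply (Df a)) = norm (Df x - Df a)"
      by (simp add: norm_blinfun.rep_eq minus_blinfun.rep_eq fun_diff_def)
    also have "\<dots> \<le> B2 * norm (x - a)" by (rule Df_lipschitz)
    also have "\<dots> \<le> B2 * norm (b - a)"
      using that B2_nonneg by (intro mult_left_mono) (auto simp: dist_norm norm_minus_commute)
    finally show ?thesis .
  qed
  then have "norm (f b - f a - blinfun_apply (Df a) (b - a)) \<le> norm (b - a) * (B2 * norm (b - a))"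
    by (intro differentiable_bound_linearization[where S="?S"])
       (auto simp: dist_norm intro: mult_left_le_one_le has_derivative_at_withinI[OF f_deriv])
  then show ?thesis by (simp add: power2_eq_square mult.commute mult.left_commute)
qed

lemma f_deriv_path_eq: "f_deriv_path f z z' t = Df (z t) o\<^sub>L z' t"
proof -
  have "(\<lambda>v. blinfun_apply (Df (z t)) (blinfun_apply (z' t) v)) = blinfun_apply (Df (z t) o\<^sub>L z' t)"
    by (rule ext) simp
  then show ?thesis
    unfolding f_deriv_path_def frechet_derivative_at[OF f_deriv, symmetric] by (simp add: blinfun_apply_inverse)
qed

lemma lip_norm:
  shows lip_norm_nonneg: "0 \<le> lip_norm f" and lip_norm_le: "norm (f a - f b) \<le> lip_norm f * norm (a - b)"
proof -
  let ?R = "(\<lambda>(y, y'). norm (f y - f y') / dist y y') ` {(y, y'). y \<noteq> y'}"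
  have "bdd_above ?R"
  proof (rule bdd_aboveI2)
    fix x :: "'y \<times> 'y" assume "x \<in> {(y, y'). y \<noteq> y'}"
    then obtain y y' where "x = (y, y')" "y \<noteq> y'" by auto
    moreover have "norm (f y - f y') / dist y y' \<le> B1 * norm (y - y') / dist y y'"
      using f_lipschitz[of y y'] by (intro divide_right_mono) auto
    ultimately show "(\<lambda>(y, y'). norm (f y - f y') / dist y y') x \<le> B1" by (simp add: dist_norm)
  qed
  then have up: "norm (f y - f y') / dist y y' \<le> lip_norm f" if "y \<noteq> y'" for y y'
    unfolding lip_norm_def using that by (intro cSup_upper) auto
  obtain e :: 'y where "e \<noteq> 0" using nonzero_Basis by blast
  then have "norm (f 0 - f e) / dist 0 e \<le> lip_norm f" using up[of 0 e] by simp
  moreover have "0 \<le> norm (f 0 - f e) / dist 0 e" by simp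
  ultimately show "0 \<le> lip_norm f" by linarith
  show "norm (f a - f b) \<le> lip_norm f * norm (a - b)"
    using up[of a b] by (cases "a = b") (auto simp: dist_norm divide_le_eq)
qed

lemma c_f_nonneg: "0 \<le> c_f f" unfolding c_f_def using sup_norm_nonneg lip_norm_nonneg by simp

lemma f_continuous: "continuous_on S f"
  using f_deriv by (meson has_derivative_continuous continuous_at_imp_continuous_on)

end

section \<open>Variation estimates\<close>

lemma var2_nonneg: "0 \<le> var2 q F s t"
  unfolding var2_def by simp

lemma variation_le_of_var2_le:
  assumes "q > 0" "finite_var2 q F 0 T" "var2 q F 0 T \<le> M" "0 \<le> T"
  shows "variation (\<lambda>a b. norm (F a b) powr q) 0 T \<le> M powr q"
proof -
  let ?v = "variation (\<lambda>a b. norm (F a b) powr q) 0 T"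
  have "0 \<le> ?v" using variation_nonneg assms(2,4) unfolding finite_var2_iff by auto
  then have "?v = (?v powr (1/q)) powr q" using assms by (simp add: powr_powr)
  also have "\<dots> \<le> M powr q" using assms by (intro powr_mono2) (auto simp: var2_eq_variation)
  finally show ?thesis .
qed

lemma le_root_of_powr_le:
  fixes x q L \<omega> :: real
  assumes "0 \<le> x" "q > 0" "0 \<le> L" "0 \<le> \<omega>" "x powr q \<le> L * \<omega>"
  shows "x \<le> L powr (1/q) * \<omega> powr (1/q)"
proof -
  have "x = (x powr q) powr (1/q)" using assms by (simp add: powr_powr)
  also have "\<dots> \<le> (L * \<omega>) powr (1/q)" by (rule powr_mono2) (use assms in auto)
  finally show ?thesis by (simp add: powr_mult)
qed

lemma powr_le_bound:
  fixes \<omega> d M :: real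
  assumes "0 \<le> \<omega>" "\<omega> \<le> M" "1 \<le> M" "0 \<le> d" "d \<le> 1"
  shows "\<omega> powr d \<le> M"
proof -
  have "\<omega> powr d \<le> M powr d" by (rule powr_mono2) (use assms in auto)
  also have "\<dots> \<le> M powr 1" by (rule powr_mono) (use assms in auto)
  finally show ?thesis using assms(3) by simp
qed

lemma powr_add_le_bound:
  fixes \<omega> b d M :: real
  assumes "0 \<le> \<omega>" "\<omega> \<le> M" "1 \<le> M" "0 \<le> d" "d \<le> 1"
  shows "\<omega> powr (b + d) \<le> M * \<omega> powr b"
  using mult_right_mono[OF powr_le_bound[OF assms], of "\<omega> powr b"] by (simp add: powr_add mult.commute)

lemma finite_var2_of_increment_bound:
  fixes F :: "real \<Rightarrow> real \<Rightarrow> 'e::real_normed_vector" and w :: "real \<Rightarrow> real"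
  assumes q: "q > 0" and c: "c \<ge> 0" and T: "0 \<le> T"
    and w: "\<And>a b. 0 \<le> a \<Longrightarrow> a \<le> b \<Longrightarrow> b \<le> T \<Longrightarrow> w a \<le> w b"
    and F: "\<And>a b. 0 \<le> a \<Longrightarrow> a \<le> b \<Longrightarrow> b \<le> T \<Longrightarrow> norm (F a b) \<le> c * (w b - w a) powr (1/q)"
  shows "finite_var2 q F 0 T" "var2 q F 0 T \<le> c * (w T - w 0) powr (1/q)"
proof -
  let ?g = "\<lambda>a b. norm (F a b) powr q"
  have "?g a b \<le> c powr q * w b - c powr q * w a" if "0 \<le> a" "a \<le> b" "b \<le> T" for a b
  proof -
    have "?g a b \<le> (c * (w b - w a) powr (1/q)) powr q" using F[OF that] q by (intro powr_mono2) auto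
    also have "\<dots> = c powr q * (w b - w a)" using q w[OF that] by (simp add: powr_mult powr_powr)
    finally show ?thesis by (simp add: algebra_simps)
  qed
  then have bound: "psum ?g P \<le> c powr q * w T - c powr q * w 0" if "fin_partition 0 T P" for P
    using psum_mono_on[of P ?g "\<lambda>a b. c powr q * w b - c powr q * w a"] that
      psum_increments[of P "\<lambda>t. c powr q * w t"] fin_partition_Min[OF that] fin_partition_Max[OF that]
    unfolding fin_partition_def by fastforce
  then have bdd: "bdd_variation ?g 0 T" by (rule bdd_variationI)
  then show "finite_var2 q F 0 T" unfolding finite_var2_iff .
  have "variation ?g 0 T \<le> c powr q * (w T - w 0)" using variation_le[OF T bound] by (simp add: algebra_simps)
  then have "variation ?g 0 T powr (1/q) \<le> (c powr q * (w T - w 0)) powr (1/q)"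
    using q variation_nonneg[of ?g, OF _ bdd T] by (intro powr_mono2) auto
  also have "\<dots> = c * (w T - w 0) powr (1/q)" using q c by (simp add: powr_mult powr_powr)
  finally show "var2 q F 0 T \<le> c * (w T - w 0) powr (1/q)" unfolding var2_eq_variation .
qed

lemma finite_var2_compare:
  fixes F :: "real \<Rightarrow> real \<Rightarrow> 'e::real_normed_vector" and G :: "real \<Rightarrow> real \<Rightarrow> 'f::real_normed_vector"
  assumes q: "q > 0" and L: "L \<ge> 0" and T: "0 \<le> T"
    and FG: "\<And>a b. norm (F a b) \<le> L * norm (G a b)" and G: "finite_var2 q G 0 T"
  shows "finite_var2 q F 0 T" "var2 q F 0 T \<le> L * var2 q G 0 T"
proof -
  let ?f = "\<lambda>a b. norm (F a b) powr q" and ?g = "\<lambda>a b. norm (G a b) powr q"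
  have bG: "bdd_variation ?g 0 T" using G unfolding finite_var2_iff .
  have "?f a b \<le> L powr q * ?g a b" for a b
    using powr_mono2[of q "norm (F a b)" "L * norm (G a b)"] FG q by (simp add: powr_mult)
  then have bound: "psum ?f P \<le> L powr q * variation ?g 0 T" if "fin_partition 0 T P" for P
    using psum_mono[of ?f "\<lambda>a b. L powr q * ?g a b" P] psum_cmult[of "L powr q" ?g P]
      mult_left_mono[OF psum_le_variation[OF bG that], of "L powr q"] by simp
  then have bF: "bdd_variation ?f 0 T" by (rule bdd_variationI)
  then show "finite_var2 q F 0 T" unfolding finite_var2_iff .
  have "variation ?f 0 T powr (1/q) \<le> (L powr q * variation ?g 0 T) powr (1/q)"
    using q variation_nonneg[of ?f, OF _ bF T] variation_le[OF T bound] by (intro powr_mono2) auto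
  also have "\<dots> = L * variation ?g 0 T powr (1/q)" using q L by (simp add: powr_mult powr_powr)
  finally show "var2 q F 0 T \<le> L * var2 q G 0 T" unfolding var2_eq_variation .
qed

lemma var2_zero:
  fixes F :: "real \<Rightarrow> real \<Rightarrow> 'e::real_normed_vector"
  assumes "\<And>a b. F a b = 0" "0 \<le> T" "q > 0"
  shows "finite_var2 q F 0 T" "var2 q F 0 T = 0"
  using finite_var2_of_increment_bound[of q 0 T "\<lambda>t. 0" F] assms var2_nonneg[of q F 0 T] by auto

section \<open>Invariance of the ball\<close>

lemma powr_mult_powr_le:
  fixes x y W \<alpha> \<beta> :: real
  assumes "0 \<le> x" "x \<le> W" "0 \<le> y" "y \<le> W" "0 \<le> \<alpha>" "0 \<le> \<beta>"
  shows "x powr \<alpha> * y powr \<beta> \<le> W powr (\<alpha> + \<beta>)"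
proof -
  have "x powr \<alpha> * y powr \<beta> \<le> W powr \<alpha> * W powr \<beta>"
    by (intro mult_mono powr_mono2) (use assms in auto)
  then show ?thesis by (simp add: powr_add)
qed

lemma continuous_on_tri_set_fst_snd:
  fixes T :: real
  assumes "continuous_on {0..T} h"
  shows "continuous_on (tri_set T) (\<lambda>x. h (fst x))" "continuous_on (tri_set T) (\<lambda>x. h (snd x))"
  by (auto intro!: continuous_on_compose2[OF assms] continuous_intros simp: tri_set_def)

lemma continuous_on_norm_powr:
  fixes F :: "real \<times> real \<Rightarrow> 'e::real_normed_vector"
  assumes "continuous_on S F" "q > 0"
  shows "continuous_on S (\<lambda>x. norm (F x) powr q)"
  by (rule continuous_on_powr') (use assms in \<open>auto intro!: continuous_intros\<close>)

context C2b_field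
begin

definition defect_const :: "real \<Rightarrow> real \<Rightarrow> real" where
  "defect_const p m = (B2 * (m / c_f f)^2 + B1 * m^2)
     + real DIM('x)^2 * (B2 * (m / c_f f) * sup_norm f + B1 * m)"

definition remainder_const :: "real \<Rightarrow> real \<Rightarrow> real" where
  "remainder_const p m = real DIM('x)^2 * B1 * sup_norm f + 5 * sewing_const (3/p) * defect_const p m"

definition increment_const :: "real \<Rightarrow> real \<Rightarrow> real" where
  "increment_const p m = sup_norm f + 5 * remainder_const p m"

lemma constants_nonneg:
  assumes "0 < p" "p < 3" "0 \<le> m"
  shows "0 \<le> defect_const p m" "0 \<le> remainder_const p m" "0 \<le> increment_const p m"
proof -
  have "0 < sewing_const (3/p)" using assms by (intro sewing_const_pos) (simp add: field_simps)
  then show "0 \<le> defect_const p m" "0 \<le> remainder_const p m" "0 \<le> increment_const p m"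
    unfolding defect_const_def remainder_const_def increment_const_def
    using B1_nonneg B2_nonneg sup_norm_nonneg c_f_nonneg assms by simp_all
qed

end

locale ball_invariance = C2b_field f Df D2f
  for f :: "'y::euclidean_space \<Rightarrow> ('x::euclidean_space \<Rightarrow>\<^sub>L 'y)" and Df D2f +
  fixes p :: real and X :: "real \<Rightarrow> real \<Rightarrow> 'x" and XX :: "real \<Rightarrow> real \<Rightarrow> ('x \<Rightarrow>\<^sub>L 'x)"
    and m T e :: real and z :: "real \<Rightarrow> 'y" and z' :: "real \<Rightarrow> ('x \<Rightarrow>\<^sub>L 'y)"
  assumes p: "2 < p" "p < 3" and rp: "rough_path p X XX" and m: "1 \<le> m" and T: "0 < T" "T \<le> 1"
    and e: "0 < e" and omega: "omega_rp p X XX 0 T \<le> e" and ball: "(z, z') \<in> ball_T p X f T m"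
    and c_f_pos: "0 < c_f f"
begin

definition R :: "real \<Rightarrow> real \<Rightarrow> 'y" where "R = remainder X z z'"
definition lamX :: real where "lamX = e powr p"
definition lamXX :: real where "lamXX = e powr (p/2)"
definition lamz :: real where "lamz = (m / c_f f) powr p"
definition lamz' :: real where "lamz' = m powr p"

text \<open>Each of the five p-variation quantities, normalised by the bound it satisfies, is dominated by
  the single control w below; as each normalised total is at most 1, w T \<le> 5.\<close>

definition gauge :: "real \<Rightarrow> real \<Rightarrow> real" where
  "gauge a b = norm (X a b) powr p / lamX + norm (XX a b) powr (p/2) / lamXX
     + norm (z b - z a) powr p / lamz + norm (z' b - z' a) powr p / lamz'
     + norm (R a b) powr (p/2) / lamz'"

definition w :: "real \<Rightarrow> real" where "w t = variation gauge 0 t"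

lemma lam_pos: "0 < lamX" "0 < lamXX" "0 < lamz" "0 < lamz'"
  unfolding lamX_def lamXX_def lamz_def lamz'_def using e m c_f_pos by auto

lemma p_pos: "0 < p" "0 < p/2" using p by auto

lemma rough_path_facts:
  "continuous_on (tri_set 1) (\<lambda>(s, t). (X s t, XX s t))"
  "\<And>s u t. 0 \<le> s \<Longrightarrow> s \<le> u \<Longrightarrow> u \<le> t \<Longrightarrow> t \<le> 1 \<Longrightarrow> X s t = X s u + X u t"
  "\<And>s u t. 0 \<le> s \<Longrightarrow> s \<le> u \<Longrightarrow> u \<le> t \<Longrightarrow> t \<le> 1 \<Longrightarrow> XX s t = XX s u + XX u t + tensor (X s u) (X u t)"
  "finite_var2 p X 0 1" "finite_var2 (p / 2) XX 0 1"
  using rp unfolding rough_path_def by auto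

lemma ball_facts:
  "continuous_on {0..T} z" "continuous_on {0..T} z'" "finite_pvar p z 0 T" "finite_pvar p z' 0 T"
  "finite_var2 (p / 2) R 0 T" "pvar p z 0 T \<le> m / c_f f" "var2 (p / 2) R 0 T \<le> m\<^sup>2"
  "pvar p z' 0 T \<le> m" "\<And>t. t \<in> {0..T} \<Longrightarrow> norm (z' t) \<le> sup_norm f"
  using ball unfolding ball_T_def controlled_def R_def by auto

lemma diag_zero: "0 \<le> s \<Longrightarrow> s \<le> 1 \<Longrightarrow> X s s = 0" "0 \<le> s \<Longrightarrow> s \<le> 1 \<Longrightarrow> XX s s = 0"
  "0 \<le> s \<Longrightarrow> s \<le> 1 \<Longrightarrow> R s s = 0"
proof -
  assume s: "0 \<le> s" "s \<le> 1"
  show X0: "X s s = 0" using rough_path_facts(2)[OF s(1) order_refl order_refl s(2)] by simp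
  have "tensor (X s s) (X s s) = 0" by (rule blinfun_eqI) (simp add: tensor_apply X0)
  then show "XX s s = 0" using rough_path_facts(3)[OF s(1) order_refl order_refl s(2)] by simp
  show "R s s = 0" unfolding R_def remainder_def using X0 by simp
qed

lemma variation_bounds:
  "variation (\<lambda>a b. norm (X a b) powr p) 0 T \<le> lamX"
  "variation (\<lambda>a b. norm (XX a b) powr (p/2)) 0 T \<le> lamXX"
  "variation (\<lambda>a b. norm (z b - z a) powr p) 0 T \<le> lamz"
  "variation (\<lambda>a b. norm (z' b - z' a) powr p) 0 T \<le> lamz'"
  "variation (\<lambda>a b. norm (R a b) powr (p/2)) 0 T \<le> lamz'"
  and bdd_variations:
  "bdd_variation (\<lambda>a b. norm (X a b) powr p) 0 T"
  "bdd_variation (\<lambda>a b. norm (XX a b) powr (p/2)) 0 T"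
  "bdd_variation (\<lambda>a b. norm (z b - z a) powr p) 0 T"
  "bdd_variation (\<lambda>a b. norm (z' b - z' a) powr p) 0 T"
  "bdd_variation (\<lambda>a b. norm (R a b) powr (p/2)) 0 T"
proof -
  have fin: "finite_var2 p X 0 T" "finite_var2 (p/2) XX 0 T"
    using rough_path_facts(4,5) bdd_variation_subinterval[of _ 0 1 0 T] T unfolding finite_var2_iff by auto
  have incr: "incr h = (\<lambda>a b. h b - h a)" for h :: "real \<Rightarrow> 'b::real_normed_vector" unfolding incr_def by auto
  show "bdd_variation (\<lambda>a b. norm (X a b) powr p) 0 T"
    "bdd_variation (\<lambda>a b. norm (XX a b) powr (p/2)) 0 T"
    "bdd_variation (\<lambda>a b. norm (z b - z a) powr p) 0 T"
    "bdd_variation (\<lambda>a b. norm (z' b - z' a) powr p) 0 T"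
    "bdd_variation (\<lambda>a b. norm (R a b) powr (p/2)) 0 T"
    using fin ball_facts(3,4,5) unfolding finite_var2_iff finite_pvar_def incr by auto
  have "var2 p X 0 T \<le> e" "var2 (p/2) XX 0 T \<le> e"
    using omega var2_nonneg[of "p/2" XX 0 T] var2_nonneg[of p X 0 T] unfolding omega_rp_def by linarith+
  then show "variation (\<lambda>a b. norm (X a b) powr p) 0 T \<le> lamX"
    "variation (\<lambda>a b. norm (XX a b) powr (p/2)) 0 T \<le> lamXX"
    using variation_le_of_var2_le[OF p_pos(1) fin(1)] variation_le_of_var2_le[OF p_pos(2) fin(2)] T
    unfolding lamX_def lamXX_def by auto
  show "variation (\<lambda>a b. norm (z b - z a) powr p) 0 T \<le> lamz"
    using variation_le_of_var2_le[OF p_pos(1), of "incr z" T "m / c_f f"] ball_facts(3,6) T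
    unfolding finite_pvar_def pvar_def incr lamz_def by auto
  show "variation (\<lambda>a b. norm (z' b - z' a) powr p) 0 T \<le> lamz'"
    using variation_le_of_var2_le[OF p_pos(1), of "incr z'" T m] ball_facts(4,8) T
    unfolding finite_pvar_def pvar_def incr lamz'_def by auto
  have "m\<^sup>2 = m powr 2" using powr_realpow[of m 2] m by simp
  then have "(m\<^sup>2) powr (p/2) = lamz'" unfolding lamz'_def by (simp add: powr_powr)
  then show "variation (\<lambda>a b. norm (R a b) powr (p/2)) 0 T \<le> lamz'"
    using variation_le_of_var2_le[OF p_pos(2), of R T "m\<^sup>2"] ball_facts(5,7) T by auto
qed

lemma gauge_nonneg: "0 \<le> gauge a b"
  unfolding gauge_def using lam_pos by simp

lemma psum_gauge_le: "fin_partition 0 T P \<Longrightarrow> psum gauge P \<le> 5"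
proof -
  assume P: "fin_partition 0 T P"
  have "psum gauge P = psum (\<lambda>a b. norm (X a b) powr p) P / lamX + psum (\<lambda>a b. norm (XX a b) powr (p/2)) P / lamXX
     + psum (\<lambda>a b. norm (z b - z a) powr p) P / lamz + psum (\<lambda>a b. norm (z' b - z' a) powr p) P / lamz'
     + psum (\<lambda>a b. norm (R a b) powr (p/2)) P / lamz'"
    unfolding gauge_def psum_add psum_divide ..
  moreover have "psum (\<lambda>a b. norm (X a b) powr p) P / lamX \<le> 1"
    "psum (\<lambda>a b. norm (XX a b) powr (p/2)) P / lamXX \<le> 1"
    "psum (\<lambda>a b. norm (z b - z a) powr p) P / lamz \<le> 1"
    "psum (\<lambda>a b. norm (z' b - z' a) powr p) P / lamz' \<le> 1"
    "psum (\<lambda>a b. norm (R a b) powr (p/2)) P / lamz' \<le> 1"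
    using psum_le_variation[OF bdd_variations(1) P] psum_le_variation[OF bdd_variations(2) P]
      psum_le_variation[OF bdd_variations(3) P] psum_le_variation[OF bdd_variations(4) P]
      psum_le_variation[OF bdd_variations(5) P] variation_bounds lam_pos
    by (simp_all add: divide_le_eq)
  ultimately show ?thesis by linarith
qed

lemma continuous_gauge: "continuous_on (tri_set T) (\<lambda>(a,b). gauge a b)"
proof -
  have "tri_set T \<subseteq> tri_set 1" using T unfolding tri_set_def by auto
  then have XXX: "continuous_on (tri_set T) (\<lambda>x. X (fst x) (snd x))" "continuous_on (tri_set T) (\<lambda>x. XX (fst x) (snd x))"
    using continuous_on_fst[OF rough_path_facts(1)] continuous_on_snd[OF rough_path_facts(1)]
    by (auto simp: case_prod_beta elim: continuous_on_subset)
  have zz: "continuous_on (tri_set T) (\<lambda>x. z (snd x) - z (fst x))" "continuous_on (tri_set T) (\<lambda>x. z' (snd x) - z' (fst x))"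
    by (intro continuous_on_diff continuous_on_tri_set_fst_snd ball_facts)+
  have "continuous_on (tri_set T) (\<lambda>x. R (fst x) (snd x))"
    unfolding R_def remainder_def
    by (intro continuous_intros continuous_on_tri_set_fst_snd ball_facts XXX)
  then have "continuous_on (tri_set T) (\<lambda>x. gauge (fst x) (snd x))"
    unfolding gauge_def using lam_pos
    by (intro continuous_on_add continuous_on_divide continuous_on_const continuous_on_norm_powr
        XXX zz p_pos) auto
  then show ?thesis by (simp add: case_prod_beta')
qed

sublocale gauge: continuous_bdd_variation gauge T
  by unfold_locales (rule gauge_nonneg, rule continuous_gauge, rule bdd_variationI, erule psum_gauge_le)

lemma w_mono: "0 \<le> a \<Longrightarrow> a \<le> b \<Longrightarrow> b \<le> T \<Longrightarrow> w a \<le> w b"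
  unfolding w_def by (rule gauge.variation_from_0_mono)

lemma w_cont: "continuous_on {0..T} w"
  unfolding w_def by (rule gauge.continuous_on_variation_from_0)

lemma w_bounds: "w 0 = 0" "w T \<le> 5"
proof -
  have "psum gauge P \<le> 0" if "fin_partition 0 0 P" for P
  proof -
    have "P = {0}" using that unfolding fin_partition_def by auto
    then show ?thesis by simp
  qed
  then have "variation gauge 0 0 \<le> 0" by (intro variation_le) auto
  then show "w 0 = 0" using gauge.variation_nonneg'[of 0 0] T unfolding w_def by simp
  show "w T \<le> 5" unfolding w_def using T psum_gauge_le by (intro variation_le) auto
qed

lemma w_increment_le_5: "0 \<le> a \<Longrightarrow> a \<le> b \<Longrightarrow> b \<le> T \<Longrightarrow> 0 \<le> w b - w a \<and> w b - w a \<le> 5"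
  using w_mono[of 0 a] w_mono[of b T] w_mono[of a b] w_bounds by auto

lemma gauge_le_w: "0 \<le> a \<Longrightarrow> a \<le> b \<Longrightarrow> b \<le> T \<Longrightarrow> gauge a b \<le> w b - w a"
proof -
  assume h: "0 \<le> a" "a \<le> b" "b \<le> T"
  show ?thesis
  proof (cases "a = b")
    case True
    then show ?thesis unfolding gauge_def using diag_zero h T by simp
  next
    case False
    then have "gauge a b \<le> variation gauge a b" using le_variation[OF gauge.bdd_sub] h by simp
    also have "\<dots> \<le> w b - w a" unfolding w_def using gauge.superadditive[of 0 a b] h by simp
    finally show ?thesis .
  qed
qed

lemma increment_bounds:
  assumes "0 \<le> a" "a \<le> b" "b \<le> T"
  shows "norm (X a b) \<le> e * (w b - w a) powr (1/p)"
    "norm (XX a b) \<le> e * (w b - w a) powr (2/p)"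
    "norm (z b - z a) \<le> (m / c_f f) * (w b - w a) powr (1/p)"
    "norm (z' b - z' a) \<le> m * (w b - w a) powr (1/p)"
    "norm (R a b) \<le> m^2 * (w b - w a) powr (2/p)"
proof -
  define W where "W = w b - w a"
  have W: "0 \<le> W" using w_mono[OF assms] unfolding W_def by simp
  have root: "x \<le> lam powr (1/q) * W powr (1/q)" if "x powr q / lam \<le> W" "lam > 0" "q > 0" "0 \<le> x"
    for x q lam :: real
    using le_root_of_powr_le[of x q lam W] that W by (simp add: divide_le_eq mult.commute)
  have G: "gauge a b \<le> W" unfolding W_def by (rule gauge_le_w[OF assms])
  have terms: "norm (X a b) powr p / lamX \<le> W" "norm (XX a b) powr (p/2) / lamXX \<le> W"
    "norm (z b - z a) powr p / lamz \<le> W" "norm (z' b - z' a) powr p / lamz' \<le> W"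
    "norm (R a b) powr (p/2) / lamz' \<le> W"
    using G lam_pos unfolding gauge_def by (smt (verit) divide_nonneg_pos powr_ge_zero)+
  have roots: "lamX powr (1/p) = e" "lamXX powr (1/(p/2)) = e" "lamz' powr (1/p) = m"
      "lamz' powr (1/(p/2)) = m^2" "1/(p/2) = 2/p"
    unfolding lamX_def lamXX_def lamz'_def using e m p_pos by (simp_all add: powr_powr powr_realpow)
  show "norm (X a b) \<le> e * (w b - w a) powr (1/p)"
    using root[OF terms(1) lam_pos(1) p_pos(1)] roots unfolding W_def by simp
  show "norm (XX a b) \<le> e * (w b - w a) powr (2/p)"
    using root[OF terms(2) lam_pos(2) p_pos(2)] roots unfolding W_def by simp
  show "norm (z b - z a) \<le> (m / c_f f) * (w b - w a) powr (1/p)"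
    using root[OF terms(3) lam_pos(3) p_pos(1)] m c_f_pos p_pos unfolding W_def lamz_def by (simp add: powr_powr)
  show "norm (z' b - z' a) \<le> m * (w b - w a) powr (1/p)"
    using root[OF terms(4) lam_pos(4) p_pos(1)] roots unfolding W_def by simp
  show "norm (R a b) \<le> m^2 * (w b - w a) powr (2/p)"
    using root[OF terms(5) lam_pos(4) p_pos(2)] roots unfolding W_def by simp
qed

definition Dfz :: "real \<Rightarrow> ('x \<Rightarrow>\<^sub>L ('x \<Rightarrow>\<^sub>L 'y))" where
  "Dfz s = Df (z s) o\<^sub>L z' s"

lemma norm_Dfz_le:
  assumes "0 \<le> s" "s \<le> T" shows "norm (Dfz s) \<le> B1 * sup_norm f"
proof -
  have "norm (Dfz s) \<le> norm (Df (z s)) * norm (z' s)" unfolding Dfz_def by (rule norm_blinfun_compose)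
  also have "\<dots> \<le> B1 * sup_norm f" using norm_Df_le ball_facts(9)[of s] assms B1_nonneg by (intro mult_mono) auto
  finally show ?thesis .
qed

lemma Dfz_increment_bound:
  assumes "0 \<le> s" "s \<le> u" "u \<le> T"
  shows "norm (Dfz u - Dfz s) \<le> (B2 * (m / c_f f) * sup_norm f + B1 * m) * (w u - w s) powr (1/p)"
proof -
  have "Dfz u - Dfz s = ((Df (z u) - Df (z s)) o\<^sub>L z' u) + (Df (z s) o\<^sub>L (z' u - z' s))"
    unfolding Dfz_def by (rule blinfun_eqI) (simp add: blinfun.add_left blinfun.diff_left blinfun.diff_right)
  then have "norm (Dfz u - Dfz s) \<le> norm ((Df (z u) - Df (z s)) o\<^sub>L z' u) + norm (Df (z s) o\<^sub>L (z' u - z' s))"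
    by (simp add: norm_triangle_ineq)
  also have "\<dots> \<le> norm (Df (z u) - Df (z s)) * norm (z' u) + norm (Df (z s)) * norm (z' u - z' s)"
    by (intro add_mono norm_blinfun_compose)
  also have "\<dots> \<le> (B2 * norm (z u - z s)) * sup_norm f + B1 * norm (z' u - z' s)"
    using Df_lipschitz[of "z u" "z s"] ball_facts(9)[of u] norm_Df_le[of "z s"] assms B1_nonneg B2_nonneg
    by (intro add_mono mult_mono) auto
  also have "\<dots> \<le> B2 * ((m / c_f f) * (w u - w s) powr (1/p)) * sup_norm f + B1 * (m * (w u - w s) powr (1/p))"
    using increment_bounds(3,4)[of s u] assms B1_nonneg B2_nonneg sup_norm_nonneg
    by (intro add_mono mult_left_mono mult_right_mono) auto
  finally show ?thesis by (simp add: algebra_simps)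
qed

lemma fz_remainder_bound:
  assumes "0 \<le> s" "s \<le> u" "u \<le> T"
  shows "norm (f (z u) - f (z s) - blinfun_apply (Dfz s) (X s u))
    \<le> (B2 * (m / c_f f)^2 + B1 * m^2) * (w u - w s) powr (2/p)"
proof -
  have eq: "f (z u) - f (z s) - blinfun_apply (Dfz s) (X s u) =
     (f (z u) - f (z s) - blinfun_apply (Df (z s)) (z u - z s)) + blinfun_apply (Df (z s)) (R s u)"
    unfolding Dfz_def R_def remainder_def by (simp add: blinfun.diff_right)
  have "norm (f (z u) - f (z s) - blinfun_apply (Dfz s) (X s u))
      \<le> norm (f (z u) - f (z s) - blinfun_apply (Df (z s)) (z u - z s)) + norm (blinfun_apply (Df (z s)) (R s u))"
    unfolding eq by (rule norm_triangle_ineq)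
  also have "\<dots> \<le> B2 * norm (z u - z s)^2 + B1 * norm (R s u)"
    by (intro add_mono taylor_remainder order_trans[OF norm_blinfun mult_right_mono[OF norm_Df_le]]) simp
  also have "\<dots> \<le> B2 * ((m / c_f f) * (w u - w s) powr (1/p))^2 + B1 * (m^2 * (w u - w s) powr (2/p))"
    using increment_bounds(3,5)[of s u] assms B1_nonneg B2_nonneg
    by (intro add_mono mult_left_mono power_mono) auto
  also have "((m / c_f f) * (w u - w s) powr (1/p))^2 = (m / c_f f)^2 * (w u - w s) powr (2/p)"
    by (simp add: power2_eq_square powr_add[symmetric])
  finally show ?thesis by (simp add: algebra_simps)
qed

definition germ :: "real \<Rightarrow> real \<Rightarrow> 'y" where
  "germ s t = blinfun_apply (f (z s)) (X s t) + apply2 (f_deriv_path f z z' s) (XX s t)"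

lemma germ_eq: "germ s t = blinfun_apply (f (z s)) (X s t) + apply2 (Dfz s) (XX s t)"
  unfolding germ_def Dfz_def f_deriv_path_eq ..

lemma germ_defect_eq:
  assumes "0 \<le> s" "s \<le> u" "u \<le> t" "t \<le> T"
  shows "germ s t - germ s u - germ u t = - blinfun_apply (f (z u) - f (z s) - blinfun_apply (Dfz s) (X s u)) (X u t)
     - apply2 (Dfz u - Dfz s) (XX u t)"
proof -
  have "0 \<le> s" "s \<le> u" "u \<le> t" "t \<le> 1" using assms T by auto
  note chen = rough_path_facts(2,3)[OF this]
  show ?thesis
    unfolding germ_eq chen apply2_add apply2_tensor apply2_diff_left
    by (simp add: blinfun.add_right blinfun.add_left blinfun.diff_left blinfun.minus_left algebra_simps)
qed

lemma germ_defect_bound: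
  assumes "0 \<le> s" "s \<le> u" "u \<le> t" "t \<le> T"
  shows "norm (germ s t - germ s u - germ u t) \<le> e * defect_const p m * (w t - w s) powr (3/p)"
proof -
  define x y W where "x = w u - w s" and "y = w t - w u" and "W = w t - w s"
  have xy: "0 \<le> x" "x \<le> W" "0 \<le> y" "y \<le> W"
    using w_mono[of s u] w_mono[of u t] w_mono[of s t] assms unfolding x_def y_def W_def by auto
  have p0: "0 \<le> 1/p" "0 \<le> 2/p" "2/p + 1/p = 3/p" "1/p + 2/p = 3/p" using p by (auto simp: field_simps)
  define A B where "A = B2 * (m / c_f f)^2 + B1 * m^2" and "B = B2 * (m / c_f f) * sup_norm f + B1 * m"
  have AB: "0 \<le> A" "0 \<le> B"
    unfolding A_def B_def using B1_nonneg B2_nonneg sup_norm_nonneg m c_f_pos by auto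
  have "norm (blinfun_apply (f (z u) - f (z s) - blinfun_apply (Dfz s) (X s u)) (X u t))
      \<le> (A * x powr (2/p)) * (e * y powr (1/p))"
    using fz_remainder_bound[of s u] increment_bounds(1)[of u t] assms AB(1) unfolding A_def x_def y_def
    by (intro order_trans[OF norm_blinfun mult_mono]) auto
  also have "\<dots> \<le> A * e * W powr (3/p)"
    using powr_mult_powr_le[OF xy p0(2,1)] p0 AB e by (simp add: mult.assoc mult_left_mono)
  finally have t1: "norm (blinfun_apply (f (z u) - f (z s) - blinfun_apply (Dfz s) (X s u)) (X u t)) \<le> A * e * W powr (3/p)" .
  have "norm (apply2 (Dfz u - Dfz s) (XX u t)) \<le> real DIM('x)^2 * norm (Dfz u - Dfz s) * norm (XX u t)"
    by (rule norm_apply2_le)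
  also have "\<dots> \<le> real DIM('x)^2 * (B * x powr (1/p)) * (e * y powr (2/p))"
    using Dfz_increment_bound[of s u] increment_bounds(2)[of u t] assms AB(2)
    unfolding B_def x_def y_def by (intro mult_mono mult_left_mono) auto
  also have "\<dots> \<le> real DIM('x)^2 * B * e * W powr (3/p)"
    using powr_mult_powr_le[OF xy p0(1,2)] p0 AB e by (simp add: mult.assoc mult_left_mono)
  finally have t2: "norm (apply2 (Dfz u - Dfz s) (XX u t)) \<le> real DIM('x)^2 * B * e * W powr (3/p)" .
  have "norm (germ s t - germ s u - germ u t) \<le> A * e * W powr (3/p) + real DIM('x)^2 * B * e * W powr (3/p)"
    unfolding germ_defect_eq[OF assms] using t1 t2 norm_triangle_ineq4[of "- _" "_ :: 'y"]
    by (simp add: order_trans[OF norm_triangle_ineq4] add_mono)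
  then show ?thesis unfolding defect_const_def A_def B_def W_def by (simp add: algebra_simps)
qed

sublocale sewing germ w T "e * defect_const p m" "3/p"
proof unfold_locales
  show "3/p > 1" "0 < T" using p T by (auto simp: field_simps)
  show "0 \<le> e * defect_const p m" using e constants_nonneg[of p m] p m by simp
qed (use w_mono w_cont germ_defect_bound in auto)

lemma rough_integral_eq_sewn_path: "rough_integral X XX T (\<lambda>s. f (z s)) (f_deriv_path f z z') = sewn_path"
proof (rule rough_integral_eqI)
  have "control T (\<lambda>s t. w t - w s)"
    unfolding control_def using w_mono
    by (auto intro!: continuous_intros continuous_on_tri_set_fst_snd w_cont simp: case_prod_beta')
  then show "integrates_germ T (\<lambda>s t. blinfun_apply (f (z s)) (X s t) + apply2 (f_deriv_path f z z' s) (XX s t)) sewn_path"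
    unfolding integrates_germ_def germ_def[symmetric] using sewn_path(1,2) sewn_path(3) \<theta>
    by (intro conjI exI[of _ "\<lambda>s t. w t - w s"] exI[of _ "3/p"] exI[of _ "sewing_const (3/p) * (e * defect_const p m)"])
      auto
qed

lemma sewn_path_remainder_bound:
  assumes "0 \<le> a" "a \<le> b" "b \<le> T"
  shows "norm (sewn_path b - sewn_path a - blinfun_apply (f (z a)) (X a b))
    \<le> e * remainder_const p m * (w b - w a) powr (2/p)"
proof -
  define \<omega> where "\<omega> = w b - w a"
  have "0 \<le> \<omega>" "\<omega> \<le> 5" using w_increment_le_5[OF assms] unfolding \<omega>_def by auto
  then have absorb: "\<omega> powr (3/p) \<le> 5 * \<omega> powr (2/p)"
    using powr_add_le_bound[of \<omega> 5 "1/p" "2/p"] p by (simp add: add_divide_distrib[symmetric])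
  have nonneg: "0 \<le> sewing_const (3/p) * (e * defect_const p m)" "0 \<le> real DIM('x)^2 * B1 * sup_norm f"
    using CK_nonneg B1_nonneg sup_norm_nonneg by auto
  have "norm (sewn_path b - sewn_path a - blinfun_apply (f (z a)) (X a b))
      \<le> norm (sewn_path b - sewn_path a - germ a b) + norm (apply2 (Dfz a) (XX a b))"
    using norm_triangle_ineq[of "sewn_path b - sewn_path a - germ a b" "apply2 (Dfz a) (XX a b)"]
    by (simp add: germ_eq)
  also have "\<dots> \<le> sewing_const (3/p) * (e * defect_const p m) * \<omega> powr (3/p)
      + real DIM('x)^2 * B1 * sup_norm f * (e * \<omega> powr (2/p))"
    using sewn_path(3)[OF assms] order_trans[OF norm_apply2_le mult_mono[OF mult_left_mono[OF norm_Dfz_le]]]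
      increment_bounds(2)[OF assms] assms nonneg unfolding \<omega>_def by (intro add_mono) (auto simp: mult.assoc)
  also have "\<dots> \<le> sewing_const (3/p) * (e * defect_const p m) * (5 * \<omega> powr (2/p))
      + real DIM('x)^2 * B1 * sup_norm f * (e * \<omega> powr (2/p))"
    using absorb nonneg e by (intro add_mono mult_left_mono) auto
  finally show ?thesis unfolding remainder_const_def \<omega>_def by (simp add: algebra_simps)
qed

lemma sewn_path_increment_bound:
  assumes "0 \<le> a" "a \<le> b" "b \<le> T"
  shows "norm (sewn_path b - sewn_path a) \<le> e * increment_const p m * (w b - w a) powr (1/p)"
proof -
  define \<omega> where "\<omega> = w b - w a"
  have "0 \<le> \<omega>" "\<omega> \<le> 5" using w_increment_le_5[OF assms] unfolding \<omega>_def by auto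
  then have absorb: "\<omega> powr (2/p) \<le> 5 * \<omega> powr (1/p)"
    using powr_add_le_bound[of \<omega> 5 "1/p" "1/p"] p by (simp add: add_divide_distrib[symmetric])
  have nonneg: "0 \<le> e * remainder_const p m" using constants_nonneg[of p m] p m e by simp
  have "norm (sewn_path b - sewn_path a)
      \<le> norm (sewn_path b - sewn_path a - blinfun_apply (f (z a)) (X a b)) + norm (blinfun_apply (f (z a)) (X a b))"
    using norm_triangle_ineq[of "sewn_path b - sewn_path a - blinfun_apply (f (z a)) (X a b)"
      "blinfun_apply (f (z a)) (X a b)"] by simp
  also have "\<dots> \<le> e * remainder_const p m * \<omega> powr (2/p) + sup_norm f * (e * \<omega> powr (1/p))"
    using sewn_path_remainder_bound[OF assms] order_trans[OF norm_blinfun mult_mono[OF norm_f_le]]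
      increment_bounds(1)[OF assms] sup_norm_nonneg unfolding \<omega>_def by (intro add_mono) auto
  also have "\<dots> \<le> e * remainder_const p m * (5 * \<omega> powr (1/p)) + sup_norm f * (e * \<omega> powr (1/p))"
    using absorb nonneg e sup_norm_nonneg by (intro add_mono mult_left_mono) auto
  finally show ?thesis unfolding increment_const_def \<omega>_def by (simp add: algebra_simps)
qed

lemma continuous_on_sewn_path: "continuous_on {0..T} sewn_path"
  unfolding continuous_on_iff
proof (intro ballI allI impI)
  fix t \<epsilon> :: real assume t: "t \<in> {0..T}" and "\<epsilon> > 0"
  have K: "0 \<le> e * increment_const p m" using constants_nonneg[of p m] p m e by simp
  obtain \<eta> where \<eta>: "\<eta> > 0" "e * increment_const p m * \<eta> powr (1/p) < \<epsilon>"
    using powr_small[of "1/p" "e * increment_const p m" \<epsilon>] p K \<open>\<epsilon> > 0\<close> by auto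
  obtain d where d: "d > 0" "\<forall>t'\<in>{0..T}. dist t' t < d \<longrightarrow> dist (w t') (w t) < \<eta>"
    using w_cont t \<eta>(1) unfolding continuous_on_iff by blast
  show "\<exists>d>0. \<forall>t'\<in>{0..T}. dist t' t < d \<longrightarrow> dist (sewn_path t') (sewn_path t) < \<epsilon>"
  proof (intro exI[of _ d] conjI ballI impI)
    fix t' assume t': "t' \<in> {0..T}" "dist t' t < d"
    have "norm (sewn_path t' - sewn_path t) \<le> e * increment_const p m * \<bar>w t' - w t\<bar> powr (1/p)"
    proof (cases "t \<le> t'")
      case True
      then show ?thesis using sewn_path_increment_bound[of t t'] t t' w_mono[of t t'] by auto
    next
      case False
      then show ?thesis using sewn_path_increment_bound[of t' t] t t' w_mono[of t' t]
        by (auto simp: norm_minus_commute)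
    qed
    also have "\<dots> \<le> e * increment_const p m * \<eta> powr (1/p)"
      using d(2) t' p K by (intro mult_left_mono powr_mono2) (auto simp: dist_real_def)
    finally show "dist (sewn_path t') (sewn_path t) < \<epsilon>" using \<eta>(2) by (simp add: dist_norm)
  qed (rule d(1))
qed

lemma var2_w_bound:
  assumes "q > 0" "1/q \<le> 1" "0 \<le> c"
  shows "c * (w T - w 0) powr (1/q) \<le> c * 5"
  using powr_le_bound[of "w T - w 0" 5 "1/q"] w_increment_le_5[of 0 T] T assms by (intro mult_left_mono) auto

lemma integral_path_bounds:
  "finite_var2 p (incr (\<lambda>t. x0 + sewn_path t)) 0 T"
  "pvar p (\<lambda>t. x0 + sewn_path t) 0 T \<le> 5 * e * increment_const p m"
  "finite_var2 (p/2) (remainder X (\<lambda>t. x0 + sewn_path t) (\<lambda>t. f (z t))) 0 T"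
  "var2 (p/2) (remainder X (\<lambda>t. x0 + sewn_path t) (\<lambda>t. f (z t))) 0 T \<le> 5 * e * remainder_const p m"
proof -
  have K: "0 \<le> e * increment_const p m" "0 \<le> e * remainder_const p m"
    using constants_nonneg[of p m] p m e by auto
  have incr: "incr (\<lambda>t. x0 + sewn_path t) = (\<lambda>a b. sewn_path b - sewn_path a)" unfolding incr_def by (intro ext) simp
  have rem: "remainder X (\<lambda>t. x0 + sewn_path t) (\<lambda>t. f (z t)) = (\<lambda>a b. sewn_path b - sewn_path a - blinfun_apply (f (z a)) (X a b))"
    unfolding remainder_def by (intro ext) simp
  have phi_var: "finite_var2 p (\<lambda>a b. sewn_path b - sewn_path a) 0 T"
      "var2 p (\<lambda>a b. sewn_path b - sewn_path a) 0 T \<le> e * increment_const p m * (w T - w 0) powr (1/p)"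
    using finite_var2_of_increment_bound[where q = p and c = "e * increment_const p m" and T = T and w = w
        and F = "\<lambda>a b. sewn_path b - sewn_path a"] p_pos K T w_mono sewn_path_increment_bound by auto
  have rem_var: "finite_var2 (p/2) (\<lambda>a b. sewn_path b - sewn_path a - blinfun_apply (f (z a)) (X a b)) 0 T"
      "var2 (p/2) (\<lambda>a b. sewn_path b - sewn_path a - blinfun_apply (f (z a)) (X a b)) 0 T
        \<le> e * remainder_const p m * (w T - w 0) powr (1/(p/2))"
    using finite_var2_of_increment_bound[where q = "p/2" and c = "e * remainder_const p m" and T = T and w = w
        and F = "\<lambda>a b. sewn_path b - sewn_path a - blinfun_apply (f (z a)) (X a b)"] p_pos K T w_mono sewn_path_remainder_bound
    by auto
  show "finite_var2 p (incr (\<lambda>t. x0 + sewn_path t)) 0 T" unfolding incr by (rule phi_var(1))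
  show "pvar p (\<lambda>t. x0 + sewn_path t) 0 T \<le> 5 * e * increment_const p m"
    unfolding pvar_def incr using phi_var(2) var2_w_bound[OF p_pos(1) _ K(1)] p by auto
  show "finite_var2 (p/2) (remainder X (\<lambda>t. x0 + sewn_path t) (\<lambda>t. f (z t))) 0 T"
    unfolding rem by (rule rem_var(1))
  show "var2 (p/2) (remainder X (\<lambda>t. x0 + sewn_path t) (\<lambda>t. f (z t))) 0 T \<le> 5 * e * remainder_const p m"
    unfolding rem using rem_var(2) var2_w_bound[OF p_pos(2) _ K(2)] p by auto
qed

lemma fz_bounds:
  "finite_var2 p (incr (\<lambda>t. f (z t))) 0 T" "pvar p (\<lambda>t. f (z t)) 0 T \<le> m"
proof -
  have fin_z: "finite_var2 p (incr z) 0 T" using ball_facts(3) unfolding finite_pvar_def .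
  have "norm (incr (\<lambda>t. f (z t)) a b) \<le> lip_norm f * norm (incr z a b)" for a b
    unfolding incr_def using lip_norm_le by simp
  note cmp = finite_var2_compare[OF p_pos(1) lip_norm_nonneg _ this fin_z]
  then show "finite_var2 p (incr (\<lambda>t. f (z t))) 0 T" using T by simp
  have "pvar p (\<lambda>t. f (z t)) 0 T \<le> lip_norm f * (m / c_f f)"
    using cmp(2) T ball_facts(6) lip_norm_nonneg unfolding pvar_def
    by (meson less_imp_le order_trans mult_left_mono)
  also have "\<dots> \<le> c_f f * (m / c_f f)"
    using sup_norm_nonneg m c_f_pos unfolding c_f_def by (intro mult_right_mono) auto
  finally show "pvar p (\<lambda>t. f (z t)) 0 T \<le> m" using c_f_pos by simp
qed

lemma I_map_in_ball:
  assumes "5 * e * remainder_const p m \<le> m^2" "5 * e * increment_const p m * c_f f \<le> m"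
  shows "I_map X XX T f x0 z z' \<in> ball_T p X f T m"
proof -
  have I: "I_map X XX T f x0 z z' = ((\<lambda>t. x0 + sewn_path t), (\<lambda>t. f (z t)))"
    unfolding I_map_def rough_integral_eq_sewn_path ..
  have "continuous_on {0..T} (\<lambda>t. x0 + sewn_path t)" by (intro continuous_intros continuous_on_sewn_path)
  moreover have "continuous_on {0..T} (\<lambda>t. f (z t))"
    by (rule continuous_on_compose2[OF f_continuous ball_facts(1)]) auto
  moreover have "pvar p (\<lambda>t. x0 + sewn_path t) 0 T \<le> m / c_f f"
  proof -
    have "c_f f * pvar p (\<lambda>t. x0 + sewn_path t) 0 T \<le> c_f f * (5 * e * increment_const p m)"
      using integral_path_bounds(2) c_f_pos by (intro mult_left_mono) auto
    also have "\<dots> = 5 * e * increment_const p m * c_f f" by (rule mult.commute)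
    also have "\<dots> \<le> m" by (rule assms(2))
    finally show ?thesis using c_f_pos by (simp add: pos_le_divide_eq mult.commute)
  qed
  moreover have "var2 (p/2) (remainder X (\<lambda>t. x0 + sewn_path t) (\<lambda>t. f (z t))) 0 T \<le> m\<^sup>2"
    using integral_path_bounds(4)[of x0] assms(1) by linarith
  ultimately show ?thesis
    unfolding I ball_T_def controlled_def finite_pvar_def
    using integral_path_bounds(1,3) fz_bounds norm_f_le by auto
qed

end

context C2b_field
begin

text \<open>With c_f f = 0 the ball's bound m / c_f f on the p-variation of z is m / 0 = 0, and f vanishes
  identically, so the integral is 0.\<close>

lemma I_map_in_ball_degenerate:
  assumes "c_f f = 0" "(z, z') \<in> ball_T p X f T m" "0 < T" "0 < p"
  shows "I_map X XX T f x0 z z' \<in> ball_T p X f T m"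
proof -
  have sup0: "sup_norm f = 0" using assms(1) sup_norm_nonneg lip_norm_nonneg unfolding c_f_def by linarith
  then have f0: "f y = 0" for y using norm_f_le[of y] by simp
  have z'0: "z' t = 0" if "t \<in> {0..T}" for t using assms(2) that sup0 unfolding ball_T_def by auto
  have ctrl: "control T (\<lambda>s t. 0)" unfolding control_def by auto
  have germ0: "blinfun_apply (f (z s)) (X s t) + apply2 (f_deriv_path f z z' s) (XX s t) = 0"
    if "0 \<le> s \<and> s \<le> t \<and> t \<le> T" for s t
    using z'0[of s] that f0 unfolding f_deriv_path_eq by (simp add: apply2_zero_left)
  have "integrates_germ T (\<lambda>s t. blinfun_apply (f (z s)) (X s t) + apply2 (f_deriv_path f z z' s) (XX s t)) (\<lambda>t. 0)"
    unfolding integrates_germ_def using ctrl germ0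
    by (intro conjI exI[of _ "\<lambda>s t. 0"] exI[of _ "2::real"] exI[of _ "0::real"]) auto
  then have "rough_integral X XX T (\<lambda>s. f (z s)) (f_deriv_path f z z') = (\<lambda>t. 0)"
    by (rule rough_integral_eqI)
  then have I: "I_map X XX T f x0 z z' = ((\<lambda>t. x0), (\<lambda>t. 0))" unfolding I_map_def by (simp add: f0)
  have zero: "incr (\<lambda>t. x0) = (\<lambda>a b. 0)" "incr (\<lambda>t. 0 :: 'x \<Rightarrow>\<^sub>L 'y) = (\<lambda>a b. 0)"
    "remainder X (\<lambda>t. x0) (\<lambda>t. 0) = (\<lambda>a b. 0)" unfolding incr_def remainder_def by auto
  have "0 \<le> m" using assms(2) var2_nonneg[of p "incr z'" 0 T] unfolding ball_T_def pvar_def by auto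
  then show ?thesis
    unfolding I ball_T_def controlled_def finite_pvar_def pvar_def
    using var2_zero[of "\<lambda>a b. 0 :: 'y" T] var2_zero[of "\<lambda>a b. 0 :: 'x \<Rightarrow>\<^sub>L 'y" T] assms sup0
    by (simp add: zero)
qed

definition ball_eps :: "real \<Rightarrow> real \<Rightarrow> real" where
  "ball_eps p m = 1 / (1 + 5 * remainder_const p m + 5 * increment_const p m * c_f f)"

lemma ball_eps:
  assumes "2 < p" "p < 3" "1 \<le> m"
  shows "0 < ball_eps p m" "5 * ball_eps p m * remainder_const p m \<le> m^2"
    "5 * ball_eps p m * increment_const p m * c_f f \<le> m"
proof -
  have K: "0 \<le> remainder_const p m" "0 \<le> increment_const p m * c_f f"
    using constants_nonneg[of p m] c_f_nonneg assms by auto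
  then have D: "0 < 1 + 5 * remainder_const p m + 5 * increment_const p m * c_f f" by simp
  then show "0 < ball_eps p m" unfolding ball_eps_def by simp
  have "5 * ball_eps p m * remainder_const p m \<le> 1" using D K unfolding ball_eps_def by (simp add: field_simps)
  also have "1 \<le> m^2" using assms(3) by (simp add: one_le_power)
  finally show "5 * ball_eps p m * remainder_const p m \<le> m^2" .
  have "5 * ball_eps p m * increment_const p m * c_f f \<le> 1" using D K unfolding ball_eps_def by (simp add: field_simps)
  then show "5 * ball_eps p m * increment_const p m * c_f f \<le> m" using assms(3) by linarith
qed

lemma I_map_in_ball_of_small_omega:
  assumes "2 < p" "p < 3" "rough_path p X XX" "1 \<le> m" "0 < T" "T \<le> 1"
    and "omega_rp p X XX 0 T \<le> ball_eps p m" "(z, z') \<in> ball_T p X f T m"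
  shows "I_map X XX T f x0 z z' \<in> ball_T p X f T m"
proof (cases "c_f f = 0")
  case True
  then show ?thesis using I_map_in_ball_degenerate assms by simp
next
  case False
  then interpret ball_invariance f Df D2f p X XX m T "ball_eps p m" z z'
    using assms ball_eps(1)[of p m] c_f_nonneg by unfold_locales auto
  show ?thesis using I_map_in_ball ball_eps[OF assms(1,2,4)] by (simp add: mult.assoc)
qed

end

theorem mainTheorem5:
  fixes p :: real and f :: "'y::euclidean_space \<Rightarrow> ('x::euclidean_space \<Rightarrow>\<^sub>L 'y)"
  assumes "2 < p" and "p < 3" and "C3b f"
  shows "\<exists>\<epsilon> :: real \<Rightarrow> real. (\<forall>m\<ge>1. \<epsilon> m > 0) \<and>
    (\<forall>(X :: real \<Rightarrow> real \<Rightarrow> 'x) (XX :: real \<Rightarrow> real \<Rightarrow> ('x \<Rightarrow>\<^sub>L 'x)) (x0 :: 'y) m T z z'.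
       rough_path p X XX \<longrightarrow> m \<ge> 1 \<longrightarrow> 0 < T \<longrightarrow> T \<le> 1 \<longrightarrow>
       omega_rp p X XX 0 T \<le> \<epsilon> m \<longrightarrow>
       (z, z') \<in> ball_T p X f T m \<longrightarrow>
       I_map X XX T f x0 z z' \<in> ball_T p X f T m)"
proof -
  obtain Df D2f D3f where
      "\<forall>y. (f has_derivative blinfun_apply (Df y)) (at y)"
      "\<forall>y. (Df has_derivative blinfun_apply (D2f y)) (at y)"
      "bounded (range f)" "bounded (range Df)" "bounded (range D2f)"
    using assms(3) unfolding C3b_def by blast
  then interpret C2b_field f Df D2f by unfold_locales auto
  show ?thesis
    using ball_eps(1) I_map_in_ball_of_small_omega assms(1,2)
    by (intro exI[of _ "ball_eps p"]) auto
qed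

end
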